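(* Let $H$ be a complex Hilbert space with inner product $\langle\cdot,\cdot\rangle$ and norm $|\cdot|$, and let $-A$ be the generator of a uniformly bounded holomorphic semigroup $e^{-tA}$ in $H$. Then the following are equivalent: (i) for every $x\in D(A^2)$ with $|x|=1$, $2\big(\operatorname{Re}\langle Ax,x\rangle\big)^2\le \operatorname{Re}\langle A^2x,x\rangle+|Ax|^2$; (ii) for every $u_0\in H$ with $u_0\neq0$, the height function $h(t)=|e^{-tA}u_0|$ is log-convex on $[0,\infty[$, that is, for all $0\le r<s<t$, $|e^{-sA}u_0|\le |e^{-rA}u_0|^{\frac{t-s}{t-r}}|e^{-tA}u_0|^{\frac{s-r}{t-r}}$. Furthermore, if in addition to (i) and (ii) the operator $A$ is positively accretive, i.e. $\nu(A)\subset\{z\in\mathbb{C}:\operatorname{Re}z>0\}$, then for every $u_0\neq0$ the function $h(t)=|e^{-tA}u_0|$ is strictly decreasing (hence strictly convex) on $[0,\infty[$ and differentiable from the right at $t=0$ with derivative $h'(0)\in[-\infty,0]$, and for $|u_0|=1$ one has $h'(0)=\inf_{t>0}h'(t)\le -m(A)$. If moreover $u_0\in D(A)$ with $|u_0|=1$, then $h'(0)=-\operatorname{Re}\langle Au_0,u_0\rangle$ and $h\in C^1([0,\infty[,\mathbb{R})\cap C^\infty(]0,\infty[,\mathbb{R})$.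
   Context: A semigroup $e^{-tA}$ in $\mathbb{B}(H)$ is uniformly bounded if $\|e^{-tA}\|\le M$ for all $t\ge0$ and some constant $M$; it is holomorphic if it extends to a holomorphic family $e^{-zA}$ for $z$ in an open sector $\Sigma_\delta=\{z\in\mathbb{C}: |\arg z|<\delta\}$ for some $\delta>0$. The numerical range of $A$ is $\nu(A)=\{\langle Ax,x\rangle: x\in D(A),\ |x|=1\}$ and its lower bound is $m(A)=\inf\operatorname{Re}\nu(A)$. *)

theory Defs
  imports "HOL-Analysis.Analysis"
begin

class complex_hilbert = real_normed_vector + complete_space +
  fixes cscale :: "complex \<Rightarrow> 'a \<Rightarrow> 'a"
    and cinner :: "'a \<Rightarrow> 'a \<Rightarrow> complex"
  assumes cscale_add_right: "cscale a (x + y) = cscale a x + cscale a y"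
    and cscale_add_left: "cscale (a + b) x = cscale a x + cscale b x"
    and cscale_cscale: "cscale a (cscale b x) = cscale (a * b) x"
    and cscale_one: "cscale 1 x = x"
    and cscale_of_real: "cscale (complex_of_real r) x = scaleR r x"
    and cinner_commute: "cinner x y = cnj (cinner y x)"
    and cinner_add_left: "cinner (x + y) z = cinner x z + cinner y z"
    and cinner_cscale_left: "cinner (cscale a x) y = a * cinner x y"
    and cinner_self_norm: "cinner x x = complex_of_real ((norm x)\<^sup>2)"

definition cbounded_linear :: "('a::complex_hilbert \<Rightarrow> 'a) \<Rightarrow> bool" where
  "cbounded_linear f \<longleftrightarrow>
     (\<forall>x y. f (x + y) = f x + f y) \<and>
     (\<forall>c x. f (cscale c x) = cscale c (f x)) \<and>
     (\<exists>K. \<forall>x. norm (f x) \<le> K * norm x)"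

definition op_holomorphic_on :: "(complex \<Rightarrow> 'a::complex_hilbert \<Rightarrow> 'a) \<Rightarrow> complex set \<Rightarrow> bool" where
  "op_holomorphic_on F S \<longleftrightarrow>
     (\<forall>z\<in>S. \<exists>D. cbounded_linear D \<and>
        ((\<lambda>w. onorm (\<lambda>x. F w x - F z x - cscale (w - z) (D x)) / cmod (w - z)) \<longlongrightarrow> 0) (at z))"

definition sector :: "real \<Rightarrow> complex set" where
  "sector \<delta> = {z. z \<noteq> 0 \<and> \<bar>Arg z\<bar> < \<delta>}"

text \<open>Strongly continuous semigroup T t for t \<ge> 0 (values for negative t are irrelevant).\<close>

definition C0_semigroup :: "(real \<Rightarrow> 'a::complex_hilbert \<Rightarrow> 'a) \<Rightarrow> bool" where
  "C0_semigroup T \<longleftrightarrow>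
     (\<forall>t\<ge>0. cbounded_linear (T t)) \<and>
     T 0 = id \<and>
     (\<forall>s\<ge>0. \<forall>t\<ge>0. T (s + t) = T s \<circ> T t) \<and>
     (\<forall>x. continuous_on {0..} (\<lambda>t. T t x))"

definition uniformly_bounded_semigroup :: "(real \<Rightarrow> 'a::complex_hilbert \<Rightarrow> 'a) \<Rightarrow> bool" where
  "uniformly_bounded_semigroup T \<longleftrightarrow> (\<exists>M. \<forall>t\<ge>0. \<forall>x. norm (T t x) \<le> M * norm x)"

definition holomorphic_semigroup :: "(real \<Rightarrow> 'a::complex_hilbert \<Rightarrow> 'a) \<Rightarrow> bool" where
  "holomorphic_semigroup T \<longleftrightarrow>
     (\<exists>\<delta>>0. \<exists>F. (\<forall>t>0. F (complex_of_real t) = T t) \<and>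
               (\<forall>z\<in>sector \<delta>. cbounded_linear (F z)) \<and>
               op_holomorphic_on F (sector \<delta>))"

definition is_generator :: "(real \<Rightarrow> 'a::complex_hilbert \<Rightarrow> 'a) \<Rightarrow> 'a set \<Rightarrow> ('a \<Rightarrow> 'a) \<Rightarrow> bool" where
  "is_generator T D G \<longleftrightarrow>
     D = {x. \<exists>y. ((\<lambda>h. scaleR (1 / h) (T h x - x)) \<longlongrightarrow> y) (at_right 0)} \<and>
     (\<forall>x\<in>D. ((\<lambda>h. scaleR (1 / h) (T h x - x)) \<longlongrightarrow> G x) (at_right 0))"

definition numerical_range :: "'a::complex_hilbert set \<Rightarrow> ('a \<Rightarrow> 'a) \<Rightarrow> complex set" where
  "numerical_range D A = {cinner (A x) x | x. x \<in> D \<and> norm x = (1::real)}"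

definition num_lower_bound :: "'a::complex_hilbert set \<Rightarrow> ('a \<Rightarrow> 'a) \<Rightarrow> real" where
  "num_lower_bound D A = Inf (Re ` numerical_range D A)"

definition strictly_convex_on :: "real set \<Rightarrow> (real \<Rightarrow> real) \<Rightarrow> bool" where
  "strictly_convex_on S f \<longleftrightarrow>
     (\<forall>x\<in>S. \<forall>y\<in>S. x \<noteq> y \<longrightarrow> (\<forall>u. 0 < u \<and> u < 1 \<longrightarrow>
        f ((1 - u) * x + u * y) < (1 - u) * f x + u * f y))"

end

theory Submission
  imports Defs "HOL-Complex_Analysis.Conformal_Mappings"
begin

text \<open>
  Let \<open>u t = T t u\<^sub>0\<close>. Holomorphy makes \<open>u\<close> smooth on \<open>]0, \<infinity>[\<close> with \<open>u' = - A u\<close>, and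
  backward uniqueness (analytic continuation of \<open>w \<mapsto> \<langle>e\<^sup>-\<^sup>w\<^sup>A y, v\<rangle>\<close> from the real axis) shows that
  \<open>u\<close> never vanishes. The derivative of \<open>ln \<bar>u\<bar>\<close> is \<open>- Re \<langle>A u, u\<rangle> / \<bar>u\<bar>\<^sup>2\<close>, and its own derivative
  is nonnegative exactly when (i) holds at \<open>u / \<bar>u\<bar>\<close>; this gives (i) \<open>\<Longrightarrow>\<close> (ii). Conversely, for
  \<open>\<bar>u\<^sub>0\<bar> = 1\<close> log-convexity on \<open>[0, 2 s]\<close> gives \<open>\<bar>u s\<bar>\<^sup>4 \<le> \<bar>u (2 s)\<bar>\<^sup>2\<close>; inserting the second-order
  Taylor expansion \<open>\<bar>u s\<bar>\<^sup>2 = 1 - 2 Re \<langle>A u\<^sub>0, u\<^sub>0\<rangle> s + (\<bar>A u\<^sub>0\<bar>\<^sup>2 + Re \<langle>A\<^sup>2 u\<^sub>0, u\<^sub>0\<rangle>) s\<^sup>2 + o(s\<^sup>2)\<close>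
  and letting \<open>s \<rightarrow> 0\<close> yields (i).

  If \<open>A\<close> is positively accretive, \<open>h = \<bar>u\<bar>\<close> has negative derivative, hence decreases strictly; a
  strictly decreasing log-convex function is strictly convex, and the difference quotients of the
  convex function \<open>h\<close> at \<open>0\<close> decrease to \<open>h'(0) = inf h'\<close>.
\<close>

lemma cinner_zero_left [simp]: "cinner 0 y = 0"
  by (metis add_cancel_right_left cinner_add_left)

lemma cinner_zero_right [simp]: "cinner x 0 = 0"
  by (metis cinner_commute cinner_zero_left complex_cnj_zero)

lemma cinner_add_right: "cinner x (y + z) = cinner x y + cinner x z"
  by (metis cinner_add_left cinner_commute complex_cnj_add)

lemma cinner_minus_left: "cinner (- x) y = - cinner x y"
  by (metis add.right_inverse cinner_add_left cinner_zero_left eq_neg_iff_add_eq_0)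

lemma cinner_minus_right: "cinner x (- y) = - cinner x y"
  by (metis cinner_commute cinner_minus_left complex_cnj_minus)

lemma cinner_diff_left: "cinner (x - y) z = cinner x z - cinner y z"
  using cinner_add_left[of x "- y" z] by (simp add: cinner_minus_left)

lemma cinner_diff_right: "cinner x (y - z) = cinner x y - cinner x z"
  using cinner_add_right[of x y "- z"] by (simp add: cinner_minus_right)

lemma cinner_scaleR_left: "cinner (r *\<^sub>R x) y = of_real r * cinner x y"
  by (metis cinner_cscale_left cscale_of_real)

lemma cinner_scaleR_right: "cinner x (r *\<^sub>R y) = of_real r * cinner x y"
  by (metis cinner_commute cinner_scaleR_left complex_cnj_complex_of_real complex_cnj_mult)

lemma cinner_cscale_right: "cinner x (cscale a y) = cnj a * cinner x y"
  by (metis cinner_commute cinner_cscale_left complex_cnj_mult)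

lemma norm_cscale: "norm (cscale a x) = cmod a * norm x"
proof -
  have "complex_of_real ((norm (cscale a x))\<^sup>2) = cinner (cscale a x) (cscale a x)"
    by (simp add: cinner_self_norm)
  also have "\<dots> = a * cnj a * cinner x x"
    by (simp add: cinner_cscale_left cinner_cscale_right)
  also have "\<dots> = complex_of_real ((cmod a * norm x)\<^sup>2)"
    by (simp add: cinner_self_norm complex_norm_square[symmetric] power_mult_distrib)
  finally have "(norm (cscale a x))\<^sup>2 = (cmod a * norm x)\<^sup>2"
    using of_real_eq_iff by blast
  then show ?thesis
    by (simp add: power2_eq_iff_nonneg)
qed

lemma cscale_scaleR_commute: "cscale c (r *\<^sub>R x) = r *\<^sub>R cscale c x"
  by (metis cscale_cscale cscale_of_real mult.commute)

lemma bounded_linear_cscale: "bounded_linear (cscale c)"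
proof
  show "\<exists>K. \<forall>x. norm (cscale c x) \<le> norm x * K"
    by (rule exI[of _ "cmod c"]) (simp add: norm_cscale mult.commute)
qed (simp_all add: cscale_add_right cscale_scaleR_commute)

lemma cbounded_linear_imp_bounded_linear: "cbounded_linear f \<Longrightarrow> bounded_linear f"
  unfolding cbounded_linear_def
proof (elim conjE exE, unfold_locales)
  fix K
  assume add: "\<forall>x y. f (x + y) = f x + f y"
    and scale: "\<forall>c x. f (cscale c x) = cscale c (f x)"
    and bound: "\<forall>x. norm (f x) \<le> K * norm x"
  show "f (x + y) = f x + f y" for x y
    using add by blast
  show "f (r *\<^sub>R x) = r *\<^sub>R f x" for r x
    using scale by (metis cscale_of_real)
  show "\<exists>K. \<forall>x. norm (f x) \<le> norm x * K"
    using bound by (metis mult.commute)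
qed

lemma bounded_linear_op_remainder:
  assumes "cbounded_linear F" "cbounded_linear G" "cbounded_linear D"
  shows "bounded_linear (\<lambda>x. F x - G x - cscale a (D x))"
  using assms by (intro bounded_linear_sub bounded_linear_compose[OF bounded_linear_cscale]
      cbounded_linear_imp_bounded_linear)

definition rinner :: "'a::complex_hilbert \<Rightarrow> 'a \<Rightarrow> real" where
  "rinner x y = Re (cinner x y)"

lemma rinner_self: "rinner x x = (norm x)\<^sup>2"
  by (simp add: rinner_def cinner_self_norm)

lemma rinner_commute: "rinner x y = rinner y x"
  unfolding rinner_def by (subst cinner_commute) simp

lemma rinner_add_left: "rinner (x + y) z = rinner x z + rinner y z"
  by (simp add: rinner_def cinner_add_left)

lemma rinner_add_right: "rinner x (y + z) = rinner x y + rinner x z"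
  by (simp add: rinner_def cinner_add_right)

lemma rinner_diff_left: "rinner (x - y) z = rinner x z - rinner y z"
  by (simp add: rinner_def cinner_diff_left)

lemma rinner_diff_right: "rinner x (y - z) = rinner x y - rinner x z"
  by (simp add: rinner_def cinner_diff_right)

lemma rinner_minus_left: "rinner (- x) z = - rinner x z"
  by (simp add: rinner_def cinner_minus_left)

lemma rinner_minus_right: "rinner x (- z) = - rinner x z"
  by (simp add: rinner_def cinner_minus_right)

lemma rinner_scaleR_left: "rinner (r *\<^sub>R x) y = r * rinner x y"
  by (simp add: rinner_def cinner_scaleR_left)

lemma rinner_scaleR_right: "rinner x (r *\<^sub>R y) = r * rinner x y"
  by (simp add: rinner_def cinner_scaleR_right)

lemma rinner_zero_left [simp]: "rinner 0 y = 0"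
  by (simp add: rinner_def)

lemma rinner_zero_right [simp]: "rinner x 0 = 0"
  by (simp add: rinner_def)

lemmas rinner_simps = rinner_add_left rinner_add_right rinner_diff_left rinner_diff_right
  rinner_minus_left rinner_minus_right rinner_scaleR_left rinner_scaleR_right

lemma abs_rinner_le: "\<bar>rinner x y\<bar> \<le> norm x * norm y"
proof (cases "y = 0")
  case False
  define t where "t = rinner x y / (norm y)\<^sup>2"
  have ny: "(norm y)\<^sup>2 > 0"
    using False by simp
  have "0 \<le> rinner (x - t *\<^sub>R y) (x - t *\<^sub>R y)"
    by (simp add: rinner_self)
  also have "\<dots> = (norm x)\<^sup>2 - 2 * t * rinner x y + t\<^sup>2 * (norm y)\<^sup>2"
    unfolding rinner_simps
    by (simp add: rinner_self rinner_commute[of y x] power2_eq_square algebra_simps)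
  also have "\<dots> = (norm x)\<^sup>2 - (rinner x y)\<^sup>2 / (norm y)\<^sup>2"
    using ny by (simp add: t_def power2_eq_square field_simps)
  finally have "(rinner x y)\<^sup>2 \<le> (norm x * norm y)\<^sup>2"
    using ny by (simp add: field_simps power_mult_distrib)
  then show ?thesis
    by (metis abs_le_square_iff abs_mult abs_norm_cancel)
qed simp

text \<open>Rotating \<open>x\<close> by a unimodular scalar makes \<open>cinner x y\<close> real and nonnegative.\<close>

lemma norm_cinner_le: "cmod (cinner x y) \<le> norm x * norm y"
proof (cases "cinner x y = 0")
  case False
  define c where "c = cinner x y"
  define a where "a = cnj c / of_real (cmod c)"
  have unit: "cmod a = 1"
    using False by (simp add: a_def c_def norm_divide)
  have "cinner (cscale a x) y = cnj c * c / of_real (cmod c)"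
    by (simp add: cinner_cscale_left a_def c_def[symmetric])
  also have "\<dots> = of_real ((cmod c)\<^sup>2) / of_real (cmod c)"
    by (simp only: complex_norm_square mult.commute)
  also have "\<dots> = of_real (cmod c)"
    using False by (simp add: c_def power2_eq_square)
  finally have "cmod c = rinner (cscale a x) y"
    by (simp add: rinner_def)
  also have "\<dots> \<le> norm (cscale a x) * norm y"
    using abs_rinner_le by (metis abs_le_D1)
  also have "\<dots> = norm x * norm y"
    by (simp add: norm_cscale unit)
  finally show ?thesis
    by (simp add: c_def)
qed simp

lemma bounded_bilinear_rinner: "bounded_bilinear (rinner :: 'a::complex_hilbert \<Rightarrow> 'a \<Rightarrow> real)"
proof
  show "\<exists>K. \<forall>a b. norm (rinner a b) \<le> norm (a::'a) * norm b * K"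
    by (rule exI[of _ 1]) (simp add: abs_rinner_le)
qed (simp_all add: rinner_simps)

lemma has_real_derivative_rinner:
  assumes "(a has_vector_derivative a') (at t within S)" "(b has_vector_derivative b') (at t within S)"
  shows "((\<lambda>t. rinner (a t) (b t)) has_real_derivative (rinner (a t) b' + rinner a' (b t))) (at t within S)"
  unfolding has_real_derivative_iff_has_vector_derivative
  by (rule bounded_bilinear.has_vector_derivative[OF bounded_bilinear_rinner assms])

lemma has_real_derivative_norm:
  fixes u :: "real \<Rightarrow> 'a::complex_hilbert"
  assumes "(u has_vector_derivative u') (at t within S)" "u t \<noteq> 0"
  shows "((\<lambda>t. norm (u t)) has_real_derivative (rinner u' (u t) / norm (u t))) (at t within S)"
proof -
  have pos: "0 < rinner (u t) (u t)"
    using assms(2) by (simp add: rinner_self)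
  have "((\<lambda>t. sqrt (rinner (u t) (u t))) has_real_derivative
      inverse (sqrt (rinner (u t) (u t))) / 2 * (rinner (u t) u' + rinner u' (u t))) (at t within S)"
    by (rule DERIV_chain2[OF DERIV_real_sqrt[OF pos] has_real_derivative_rinner[OF assms(1) assms(1)]])
  then show ?thesis
    by (simp add: rinner_self rinner_commute[of "u t" u'] field_simps)
qed


lemma has_vector_derivative_right_quotient:
  fixes f :: "real \<Rightarrow> 'b::real_normed_vector"
  assumes "(f has_vector_derivative f') (at t)"
  shows "((\<lambda>h. (1 / h) *\<^sub>R (f (t + h) - f t)) \<longlongrightarrow> f') (at_right 0)"
proof -
  have "((\<lambda>y. norm (f y - f t - (y - t) *\<^sub>R f') / norm (y - t)) \<longlongrightarrow> 0) (at t)"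
    using assms unfolding has_vector_derivative_def has_derivative_iff_norm by auto
  from LIM_offset_zero[OF this]
  have "((\<lambda>h. norm (f (t + h) - f t - h *\<^sub>R f') / norm h) \<longlongrightarrow> 0) (at 0)"
    by simp
  then have "((\<lambda>h. norm (f (t + h) - f t - h *\<^sub>R f') / norm h) \<longlongrightarrow> 0) (at_right 0)"
    by (rule tendsto_mono[rotated]) (simp add: at_le)
  then have "((\<lambda>h. (1 / h) *\<^sub>R (f (t + h) - f t) - f') \<longlongrightarrow> 0) (at_right 0)"
  proof (rule Lim_null_comparison[rotated])
    show "\<forall>\<^sub>F h in at_right 0. norm ((1 / h) *\<^sub>R (f (t + h) - f t) - f')
        \<le> norm (f (t + h) - f t - h *\<^sub>R f') / norm h"
      using eventually_at_right_less[of 0]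
    proof eventually_elim
      case (elim h)
      then have "(1 / h) *\<^sub>R (f (t + h) - f t) - f' = (1 / h) *\<^sub>R (f (t + h) - f t - h *\<^sub>R f')"
        by (simp add: algebra_simps)
      then show ?case
        using elim by (simp add: divide_simps)
    qed
  qed
  then show ?thesis
    by (rule LIM_zero_cancel)
qed

lemma weighted_geometric_mean_less:
  fixes a b u :: real
  assumes "0 < a" "0 < b" "a \<noteq> b" "0 < u" "u < 1"
  shows "a powr (1 - u) * b powr u < (1 - u) * a + u * b"
proof -
  define M where "M = (1 - u) * ln a + u * ln b"
  have exp_gt: "exp M * (1 + y) < exp M * exp y" if "y \<noteq> 0" for y
    using exp_minus_greater[of "- y"] that by simp
  have "ln a \<noteq> ln b"
    using assms by simp
  moreover have "ln a - M = u * (ln a - ln b)" "ln b - M = (1 - u) * (ln b - ln a)"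
    by (simp_all add: M_def algebra_simps)
  ultimately have "ln a - M \<noteq> 0" "ln b - M \<noteq> 0"
    using assms by simp_all
  then have "exp M * (1 + (ln a - M)) < exp M * exp (ln a - M)"
    "exp M * (1 + (ln b - M)) < exp M * exp (ln b - M)"
    using exp_gt by blast+
  moreover have "exp M * exp (ln a - M) = a" "exp M * exp (ln b - M) = b"
    using assms by (simp_all flip: exp_add)
  ultimately have "exp M * (1 + (ln a - M)) < a" "exp M * (1 + (ln b - M)) < b"
    by simp_all
  then have "(1 - u) * (exp M * (1 + (ln a - M))) + u * (exp M * (1 + (ln b - M)))
      < (1 - u) * a + u * b"
    using assms by (intro add_strict_mono mult_strict_left_mono) auto
  also have "(1 - u) * (exp M * (1 + (ln a - M))) + u * (exp M * (1 + (ln b - M))) = exp M"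
    by (simp add: M_def algebra_simps)
  also have "exp M = a powr (1 - u) * b powr u"
    using assms by (simp add: M_def powr_def exp_add)
  finally show ?thesis .
qed

lemma le_powr_mult_powr_iff_ln_le:
  fixes a b c \<alpha> \<beta> :: real
  assumes "0 < a" "0 < b" "0 < c"
  shows "c \<le> a powr \<alpha> * b powr \<beta> \<longleftrightarrow> ln c \<le> \<alpha> * ln a + \<beta> * ln b"
proof -
  have "a powr \<alpha> * b powr \<beta> = exp (\<alpha> * ln a + \<beta> * ln b)"
    using assms by (simp add: powr_def exp_add mult.commute)
  then show ?thesis
    using assms by (metis exp_le_cancel_iff exp_ln)
qed

lemma convex_on_real_iff_three_point:
  fixes g :: "real \<Rightarrow> real"
  assumes "convex I"
  shows "convex_on I g \<longleftrightarrow> (\<forall>r\<in>I. \<forall>t\<in>I. \<forall>s. r < s \<and> s < t \<longrightarrow>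
    g s \<le> (t - s) / (t - r) * g r + (s - r) / (t - r) * g t)"
proof
  assume convex: "convex_on I g"
  show "\<forall>r\<in>I. \<forall>t\<in>I. \<forall>s. r < s \<and> s < t \<longrightarrow> g s \<le> (t - s) / (t - r) * g r + (s - r) / (t - r) * g t"
  proof (intro ballI allI impI, elim conjE)
    fix r t s
    assume rt: "r \<in> I" "t \<in> I" and rst: "r < s" "s < t"
    define u where "u = (s - r) / (t - r)"
    have u: "0 \<le> u" "u \<le> 1" "(t - s) / (t - r) = 1 - u"
      using rst by (auto simp: u_def field_simps)
    have "u * (t - r) = s - r"
      using rst by (simp add: u_def)
    then have comb: "(1 - u) * r + u * t = s"
      by (simp add: algebra_simps)
    from convex_onD[OF convex u(1,2) rt]
    show "g s \<le> (t - s) / (t - r) * g r + (s - r) / (t - r) * g t"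
      unfolding u(3) u_def[symmetric] real_scaleR_def comb .
  qed
next
  assume three_point: "\<forall>r\<in>I. \<forall>t\<in>I. \<forall>s. r < s \<and> s < t \<longrightarrow>
    g s \<le> (t - s) / (t - r) * g r + (s - r) / (t - r) * g t"
  show "convex_on I g"
  proof (rule convex_on_linorderI[OF _ assms])
    fix u a b :: real
    assume u: "0 < u" "u < 1" and ab: "a \<in> I" "b \<in> I" "a < b"
    define s where "s = (1 - u) * a + u * b"
    have diffs: "s - a = u * (b - a)" "b - s = (1 - u) * (b - a)"
      by (simp_all add: s_def algebra_simps)
    then have weights: "(b - s) / (b - a) = 1 - u" "(s - a) / (b - a) = u"
      using ab(3) by simp_all
    have "0 < u * (b - a)" "0 < (1 - u) * (b - a)"
      using ab(3) u by simp_all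
    then have "a < s" "s < b"
      unfolding diffs[symmetric] by simp_all
    then have "g s \<le> (b - s) / (b - a) * g a + (s - a) / (b - a) * g b"
      using three_point ab by blast
    then show "g ((1 - u) *\<^sub>R a + u *\<^sub>R b) \<le> (1 - u) * g a + u * g b"
      unfolding weights real_scaleR_def s_def[symmetric] .
  qed
qed

lemma convex_on_ln_iff_powr:
  fixes f :: "real \<Rightarrow> real"
  assumes pos: "\<And>t. 0 \<le> t \<Longrightarrow> 0 < f t"
  shows "convex_on {0..} (\<lambda>t. ln (f t)) \<longleftrightarrow>
    (\<forall>r s t. 0 \<le> r \<and> r < s \<and> s < t \<longrightarrow>
       f s \<le> f r powr ((t - s) / (t - r)) * f t powr ((s - r) / (t - r)))"
proof -
  have "f s \<le> f r powr ((t - s) / (t - r)) * f t powr ((s - r) / (t - r)) \<longleftrightarrow>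
      ln (f s) \<le> (t - s) / (t - r) * ln (f r) + (s - r) / (t - r) * ln (f t)"
    if "0 \<le> r" "r < s" "s < t" for r s t
    by (rule le_powr_mult_powr_iff_ln_le) (use pos that in auto)
  then show ?thesis
    unfolding convex_on_real_iff_three_point[OF convex_real_interval(1)] by auto
qed

lemma convex_on_atLeast_if_greaterThan:
  fixes f :: "real \<Rightarrow> real"
  assumes convex: "convex_on {a<..} f" and cont: "(f \<longlongrightarrow> f a) (at_right a)"
  shows "convex_on {a..} f"
  unfolding convex_on_real_iff_three_point[OF convex_real_interval(1)]
proof (intro ballI allI impI, elim conjE)
  fix r t s
  assume r: "r \<in> {a..}" and t: "t \<in> {a..}" and rst: "r < s" "s < t"
  have three_point: "\<forall>r\<in>{a<..}. \<forall>t\<in>{a<..}. \<forall>s. r < s \<and> s < t \<longrightarrow>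
      f s \<le> (t - s) / (t - r) * f r + (s - r) / (t - r) * f t"
    using convex unfolding convex_on_real_iff_three_point[OF convex_real_interval(3)] .
  show "f s \<le> (t - s) / (t - r) * f r + (s - r) / (t - r) * f t"
  proof (cases "r = a")
    case False
    then show ?thesis
      using three_point r t rst by auto
  next
    case True
    have "((\<lambda>r. (t - s) / (t - r) * f r + (s - r) / (t - r) * f t) \<longlongrightarrow>
        (t - s) / (t - a) * f a + (s - a) / (t - a) * f t) (at_right a)"
      using rst True by (intro tendsto_intros cont) auto
    moreover have "\<forall>\<^sub>F r in at_right a. f s \<le> (t - s) / (t - r) * f r + (s - r) / (t - r) * f t"
      unfolding eventually_at_right_field
      using three_point rst True by (intro exI[of _ s]) auto
    ultimately show ?thesis
      using True by (intro tendsto_lowerbound) auto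
  qed
qed


lemma convex_on_slope_tendsto_INF:
  fixes f :: "real \<Rightarrow> real"
  assumes convex: "convex_on {0..} f"
  shows "((\<lambda>t. ereal ((f t - f 0) / t)) \<longlongrightarrow> (INF t\<in>{0<..}. ereal ((f t - f 0) / t))) (at_right 0)"
proof -
  define q where "q t = (f t - f 0) / t" for t
  have mono: "q s \<le> q t" if "0 < s" "s \<le> t" for s t
  proof (cases "s = t")
    case False
    then have "(f 0 - f s) / (0 - s) \<le> (f 0 - f t) / (0 - t)"
      using that by (intro convex_on_slope_le(1)[OF convex]) auto
    moreover have "(f 0 - f r) / (0 - r) = q r" for r
      unfolding q_def by (metis minus_diff_eq minus_divide_divide diff_0)
    ultimately show ?thesis
      by metis
  qed simp
  have "((\<lambda>t. ereal (q t)) \<longlongrightarrow> (INF t\<in>{0<..}. ereal (q t))) (at_right 0)"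
  proof (rule order_tendstoI)
    fix a
    assume a: "a < (INF t\<in>{0<..}. ereal (q t))"
    show "\<forall>\<^sub>F t in at_right 0. a < ereal (q t)"
      using eventually_at_right_less[of 0]
    proof eventually_elim
      case (elim t)
      then have "(INF t\<in>{0<..}. ereal (q t)) \<le> ereal (q t)"
        by (intro INF_lower) simp
      then show ?case
        using a by order
    qed
  next
    fix a
    assume "(INF t\<in>{0<..}. ereal (q t)) < a"
    then obtain t0 where t0: "0 < t0" "ereal (q t0) < a"
      unfolding INF_less_iff by auto
    show "\<forall>\<^sub>F t in at_right 0. ereal (q t) < a"
      unfolding eventually_at_right_field
    proof (intro exI[of _ t0] conjI allI impI)
      fix t
      assume "0 < t" "t < t0"
      then have "ereal (q t) \<le> ereal (q t0)"
        using mono by simp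
      then show "ereal (q t) < a"
        using t0(2) by order
    qed (rule t0(1))
  qed
  then show ?thesis
    by (simp add: q_def)
qed

lemma convex_on_INF_slope_eq_INF_deriv:
  fixes f f' :: "real \<Rightarrow> real"
  assumes convex: "convex_on {0..} f" and cont: "continuous_on {0..} f"
    and deriv: "\<And>t. 0 < t \<Longrightarrow> (f has_real_derivative f' t) (at t)"
  shows "(INF t\<in>{0<..}. ereal ((f t - f 0) / t)) = (INF t\<in>{0<..}. ereal (f' t))"
proof (rule antisym)
  show "(INF t\<in>{0<..}. ereal ((f t - f 0) / t)) \<le> (INF t\<in>{0<..}. ereal (f' t))"
  proof (rule INF_greatest)
    fix t :: real
    assume "t \<in> {0<..}"
    then have t: "0 < t"
      by simp
    have "f' t * (0 - t) \<le> f 0 - f t"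
      by (rule convex_on_imp_above_tangent[OF convex])
         (use t deriv[OF t] in \<open>auto intro: has_field_derivative_at_within\<close>)
    then have "(f t - f 0) / t \<le> f' t"
      using t by (simp add: field_simps)
    then show "(INF t\<in>{0<..}. ereal ((f t - f 0) / t)) \<le> ereal (f' t)"
      using t by (intro INF_lower2[of t]) auto
  qed
  show "(INF t\<in>{0<..}. ereal (f' t)) \<le> (INF t\<in>{0<..}. ereal ((f t - f 0) / t))"
  proof (rule INF_greatest)
    fix t :: real
    assume "t \<in> {0<..}"
    then have t: "0 < t"
      by simp
    have "continuous_on {0..t} f"
      by (rule continuous_on_subset[OF cont]) auto
    moreover have "f differentiable (at z)" if "0 < z" for z
      using deriv[OF that] unfolding real_differentiable_def by blast
    ultimately obtain l z where z: "0 < z" "z < t" "(f has_real_derivative l) (at z)"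
      and mvt: "f t - f 0 = (t - 0) * l"
      using MVT[OF t] by blast
    have "(f t - f 0) / t = f' z"
      using DERIV_unique[OF z(3) deriv[OF z(1)]] mvt t by simp
    then show "(INF t\<in>{0<..}. ereal (f' t)) \<le> ereal ((f t - f 0) / t)"
      using z by (intro INF_lower2[of z]) auto
  qed
qed


lemma taylor2_remainder_bound:
  fixes f f' :: "real \<Rightarrow> 'b::real_normed_vector"
  assumes deriv: "\<And>\<tau>. 0 \<le> \<tau> \<Longrightarrow> (f has_vector_derivative f' \<tau>) (at \<tau> within {0..})"
    and close: "\<And>\<tau>. 0 < \<tau> \<Longrightarrow> \<tau> \<le> s \<Longrightarrow> norm ((1 / \<tau>) *\<^sub>R (f' \<tau> - f' 0) - f'') \<le> K"
    and s: "0 < s" and K: "0 \<le> K"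
  shows "norm (f s - (f 0 + s *\<^sub>R f' 0 + (s\<^sup>2 / 2) *\<^sub>R f'')) \<le> K * s\<^sup>2"
proof -
  define e where "e \<tau> = f \<tau> - (f 0 + \<tau> *\<^sub>R f' 0 + (\<tau>\<^sup>2 / 2) *\<^sub>R f'')" for \<tau>
  define e' where "e' \<tau> = f' \<tau> - f' 0 - \<tau> *\<^sub>R f''" for \<tau>
  have de: "(e has_vector_derivative e' \<tau>) (at \<tau> within {0..s})" if "0 \<le> \<tau>" for \<tau>
  proof -
    have "((\<lambda>\<tau>. f 0 + \<tau> *\<^sub>R f' 0 + (\<tau>\<^sup>2 / 2) *\<^sub>R f'') has_vector_derivative f' 0 + \<tau> *\<^sub>R f'')
        (at \<tau> within {0..})"
      by (auto intro!: derivative_eq_intros)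
    from has_vector_derivative_diff[OF deriv[OF that] this]
    have "(e has_vector_derivative e' \<tau>) (at \<tau> within {0..})"
      unfolding e_def[abs_def] e'_def by (simp add: algebra_simps)
    then show ?thesis
      by (rule has_vector_derivative_within_subset) auto
  qed
  have bound: "norm (e' \<tau>) \<le> K * s" if \<tau>: "\<tau> \<in> {0..s}" for \<tau>
  proof (cases "\<tau> = 0")
    case False
    then have "e' \<tau> = \<tau> *\<^sub>R ((1 / \<tau>) *\<^sub>R (f' \<tau> - f' 0) - f'')"
      by (simp add: e'_def algebra_simps)
    then have "norm (e' \<tau>) = \<tau> * norm ((1 / \<tau>) *\<^sub>R (f' \<tau> - f' 0) - f'')"
      using \<tau> by simp
    also have "\<dots> \<le> s * K"
      using close[of \<tau>] \<tau> False K by (intro mult_mono) auto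
    finally show ?thesis
      by (simp add: mult.commute)
  qed (use s K in \<open>simp add: e'_def\<close>)
  have "norm (e s - e 0) \<le> K * s * norm (s - 0)"
  proof (rule differentiable_bound[of "{0..s}" e "\<lambda>\<tau> h. h *\<^sub>R e' \<tau>"])
    show "(e has_derivative (\<lambda>h. h *\<^sub>R e' \<tau>)) (at \<tau> within {0..s})" if "\<tau> \<in> {0..s}" for \<tau>
      using de[of \<tau>] that unfolding has_vector_derivative_def by simp
    show "onorm (\<lambda>h. h *\<^sub>R e' \<tau>) \<le> K * s" if "\<tau> \<in> {0..s}" for \<tau>
      using bound[OF that] by (simp add: onorm_scaleR_left onorm_id)
  qed (use s in auto)
  moreover have "e 0 = 0"
    by (simp add: e_def)
  ultimately show ?thesis
    using s by (simp add: e_def power2_eq_square mult_ac)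
qed

lemma taylor2_at_right_0:
  fixes f f' :: "real \<Rightarrow> 'b::real_normed_vector"
  assumes deriv: "\<And>\<tau>. 0 \<le> \<tau> \<Longrightarrow> (f has_vector_derivative f' \<tau>) (at \<tau> within {0..})"
    and second: "((\<lambda>\<tau>. (1 / \<tau>) *\<^sub>R (f' \<tau> - f' 0)) \<longlongrightarrow> f'') (at_right 0)"
  shows "((\<lambda>s. (1 / s\<^sup>2) *\<^sub>R (f s - (f 0 + s *\<^sub>R f' 0 + (s\<^sup>2 / 2) *\<^sub>R f''))) \<longlongrightarrow> 0) (at_right 0)"
  unfolding tendsto_iff
proof (intro allI impI)
  fix \<epsilon> :: real
  assume \<epsilon>: "0 < \<epsilon>"
  then have "\<forall>\<^sub>F \<tau> in at_right 0. dist ((1 / \<tau>) *\<^sub>R (f' \<tau> - f' 0)) f'' < \<epsilon> / 2"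
    using second unfolding tendsto_iff by (meson half_gt_zero)
  then obtain \<delta> where \<delta>: "0 < \<delta>"
    and close: "\<And>\<tau>. 0 < \<tau> \<Longrightarrow> \<tau> < \<delta> \<Longrightarrow> norm ((1 / \<tau>) *\<^sub>R (f' \<tau> - f' 0) - f'') < \<epsilon> / 2"
    unfolding eventually_at_right_field dist_norm by auto
  show "\<forall>\<^sub>F s in at_right 0. dist ((1 / s\<^sup>2) *\<^sub>R (f s - (f 0 + s *\<^sub>R f' 0 + (s\<^sup>2 / 2) *\<^sub>R f''))) 0 < \<epsilon>"
    unfolding eventually_at_right_field
  proof (intro exI[of _ \<delta>] conjI allI impI)
    fix s :: real
    assume s: "0 < s" "s < \<delta>"
    have "norm (f s - (f 0 + s *\<^sub>R f' 0 + (s\<^sup>2 / 2) *\<^sub>R f'')) \<le> \<epsilon> / 2 * s\<^sup>2"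
      using close s \<epsilon> by (intro taylor2_remainder_bound[OF deriv]) (auto intro: less_imp_le)
    moreover have "0 < \<epsilon> * s\<^sup>2"
      using s \<epsilon> by simp
    ultimately have "norm (f s - (f 0 + s *\<^sub>R f' 0 + (s\<^sup>2 / 2) *\<^sub>R f'')) < \<epsilon> * s\<^sup>2"
      by linarith
    then show "dist ((1 / s\<^sup>2) *\<^sub>R (f s - (f 0 + s *\<^sub>R f' 0 + (s\<^sup>2 / 2) *\<^sub>R f''))) 0 < \<epsilon>"
      using s by (simp add: dist_norm divide_simps)
  qed (rule \<delta>)
qed


section \<open>Holomorphic operator families\<close>

text \<open>For \<open>0 \<le> c < 1\<close> this is the sector \<open>\<bar>arg z\<bar> < arccos c\<close>; it is used instead of
  \<^const>\<open>sector\<close> because its convexity is evident.\<close>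

definition sector_cone :: "real \<Rightarrow> complex set" where
  "sector_cone c = {z. c * cmod z < Re z}"

lemma open_sector_cone: "open (sector_cone c)"
  unfolding sector_cone_def by (rule open_Collect_less) (intro continuous_intros)+

lemma convex_sector_cone:
  assumes "0 \<le> c"
  shows "convex (sector_cone c)"
  unfolding convex_alt sector_cone_def
proof (intro ballI allI impI, clarsimp)
  fix x y :: complex and u :: real
  assume x: "c * cmod x < Re x" and y: "c * cmod y < Re y" and u: "0 \<le> u" "u \<le> 1"
  have "c * cmod ((1 - u) *\<^sub>R x + u *\<^sub>R y) \<le> c * ((1 - u) * cmod x + u * cmod y)"
    using assms u
    by (intro mult_left_mono) (auto intro!: order.trans[OF norm_triangle_ineq] simp: abs_of_nonneg)
  also have "\<dots> < (1 - u) * Re x + u * Re y"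
  proof (cases "u = 0")
    case False
    then have "u * (c * cmod y) < u * Re y" "(1 - u) * (c * cmod x) \<le> (1 - u) * Re x"
      using x y u by (simp_all add: mult_left_mono)
    then show ?thesis
      by (simp add: distrib_left mult.left_commute)
  qed (use x in simp)
  finally show "c * cmod ((1 - u) *\<^sub>R x + u *\<^sub>R y) < (1 - u) * Re x + u * Re y" .
qed

lemma of_real_in_sector_cone: "c < 1 \<Longrightarrow> 0 < t \<Longrightarrow> complex_of_real t \<in> sector_cone c"
  by (simp add: sector_cone_def)

lemma sector_cone_subset_sector:
  assumes "0 < d" "d \<le> pi / 2"
  shows "sector_cone (cos d) \<subseteq> sector d"
proof
  fix z
  assume "z \<in> sector_cone (cos d)"
  then have z: "cos d * cmod z < Re z"
    by (simp add: sector_cone_def)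
  then have "z \<noteq> 0"
    by auto
  then have "cos d < Re z / cmod z"
    using z by (simp add: field_simps)
  then have "cos d < cos \<bar>Arg z\<bar>"
    using cos_Arg[OF \<open>z \<noteq> 0\<close>] by simp
  moreover have "\<bar>Arg z\<bar> \<le> pi"
    using Arg_bounded[of z] by auto
  ultimately have "\<bar>Arg z\<bar> < d"
    using assms cos_mono_less_eq[of d "\<bar>Arg z\<bar>"] by auto
  then show "z \<in> sector d"
    using \<open>z \<noteq> 0\<close> by (simp add: sector_def)
qed

lemma op_holomorphic_on_subset: "op_holomorphic_on F S \<Longrightarrow> U \<subseteq> S \<Longrightarrow> op_holomorphic_on F U"
  unfolding op_holomorphic_on_def by blast

lemma holomorphic_on_cinner:
  assumes S: "open S" and bl: "\<And>z. z \<in> S \<Longrightarrow> cbounded_linear (F z)"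
    and hol: "op_holomorphic_on F S"
  shows "(\<lambda>z. cinner (F z y) w) holomorphic_on S"
  unfolding holomorphic_on_open[OF S]
proof
  fix z
  assume z: "z \<in> S"
  obtain D where D: "cbounded_linear D"
    and lim: "((\<lambda>v. onorm (\<lambda>x. F v x - F z x - cscale (v - z) (D x)) / cmod (v - z)) \<longlongrightarrow> 0) (at z)"
    using hol z unfolding op_holomorphic_on_def by blast
  let ?g = "\<lambda>z. cinner (F z y) w"
  have "(?g has_field_derivative cinner (D y) w) (at z)"
    unfolding has_field_derivative_iff
  proof (rule LIM_zero_cancel, rule Lim_null_comparison)
    show "((\<lambda>v. onorm (\<lambda>x. F v x - F z x - cscale (v - z) (D x)) / cmod (v - z)
        * (norm y * norm w)) \<longlongrightarrow> 0) (at z)"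
      using tendsto_mult[OF lim tendsto_const[of "norm y * norm w"]] by simp
    show "\<forall>\<^sub>F v in at z. norm ((?g v - ?g z) / (v - z) - cinner (D y) w)
        \<le> onorm (\<lambda>x. F v x - F z x - cscale (v - z) (D x)) / cmod (v - z) * (norm y * norm w)"
      using eventually_at_in_open[OF S z]
    proof eventually_elim
      case (elim v)
      let ?R = "\<lambda>x. F v x - F z x - cscale (v - z) (D x)"
      have "bounded_linear ?R"
        using bl elim z D by (intro bounded_linear_op_remainder) auto
      then have "cmod (cinner (?R y) w) \<le> onorm ?R * norm y * norm w"
        using norm_cinner_le[of "?R y" w] onorm[of ?R y]
        by (meson mult_right_mono norm_ge_zero order_trans)
      moreover have "(?g v - ?g z) / (v - z) - cinner (D y) w = cinner (?R y) w / (v - z)"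
        using elim by (simp add: cinner_diff_left cinner_add_left cinner_cscale_left field_simps)
      ultimately show ?case
        by (simp add: norm_divide divide_right_mono)
    qed
  qed
  then show "\<exists>f'. (?g has_field_derivative f') (at z)"
    by blast
qed

lemma op_holomorphic_on_has_vector_derivative:
  assumes S: "open S" and bl: "\<And>z. z \<in> S \<Longrightarrow> cbounded_linear (F z)"
    and hol: "op_holomorphic_on F S" and t: "complex_of_real t \<in> S"
  shows "\<exists>D. ((\<lambda>\<tau>. F (of_real \<tau>) y) has_vector_derivative D) (at t)"
proof -
  let ?z = "complex_of_real t"
  obtain D where D: "cbounded_linear D"
    and lim: "((\<lambda>w. onorm (\<lambda>x. F w x - F ?z x - cscale (w - ?z) (D x)) / cmod (w - ?z)) \<longlongrightarrow> 0) (at ?z)"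
    using hol t unfolding op_holomorphic_on_def by blast
  let ?R = "\<lambda>\<tau> x. F (of_real \<tau>) x - F ?z x - cscale (of_real \<tau> - ?z) (D x)"
  have "filterlim complex_of_real (at ?z) (at t)"
    unfolding filterlim_at by (auto intro!: tendsto_eq_intros simp: eventually_at_filter)
  from filterlim_compose[OF lim this]
  have lim_real: "((\<lambda>\<tau>. onorm (?R \<tau>) / cmod (of_real \<tau> - ?z)) \<longlongrightarrow> 0) (at t)"
    by (simp add: o_def)
  have "((\<lambda>\<tau>. F (of_real \<tau>) y) has_vector_derivative D y) (at t)"
    unfolding has_vector_derivative_def has_derivative_iff_norm
  proof (intro conjI)
    show "bounded_linear (\<lambda>h. h *\<^sub>R D y)"
      by (rule bounded_linear_scaleR_left)
    show "((\<lambda>\<tau>. norm (F (of_real \<tau>) y - F ?z y - (\<tau> - t) *\<^sub>R D y) / norm (\<tau> - t)) \<longlongrightarrow> 0) (at t)"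
    proof (rule Lim_null_comparison)
      show "((\<lambda>\<tau>. onorm (?R \<tau>) / cmod (of_real \<tau> - ?z) * norm y) \<longlongrightarrow> 0) (at t)"
        using tendsto_mult[OF lim_real tendsto_const[of "norm y"]] by simp
      have "((\<lambda>\<tau>. complex_of_real \<tau>) \<longlongrightarrow> ?z) (at t)"
        by (intro tendsto_intros)
      from topological_tendstoD[OF this S t]
      show "\<forall>\<^sub>F \<tau> in at t. norm (norm (F (of_real \<tau>) y - F ?z y - (\<tau> - t) *\<^sub>R D y) / norm (\<tau> - t))
          \<le> onorm (?R \<tau>) / cmod (of_real \<tau> - ?z) * norm y"
      proof eventually_elim
        case (elim \<tau>)
        have "bounded_linear (?R \<tau>)"
          using bl elim t D by (intro bounded_linear_op_remainder) auto
        from onorm[OF this, of y]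
        have "norm (F (of_real \<tau>) y - F ?z y - (\<tau> - t) *\<^sub>R D y) \<le> onorm (?R \<tau>) * norm y"
          by (simp add: cscale_of_real flip: of_real_diff)
        then show ?case
          by (simp add: divide_right_mono flip: of_real_diff)
      qed
    qed
  qed
  then show ?thesis
    by blast
qed

lemma holomorphic_vanishing_on_ray:
  assumes hol: "g holomorphic_on sector_cone c" and c: "0 \<le> c" "c < 1" and t: "0 \<le> t"
    and vanish: "\<And>r. t < r \<Longrightarrow> g (of_real r) = 0" and z: "z \<in> sector_cone c"
  shows "g z = 0"
proof (rule analytic_continuation[OF hol open_sector_cone convex_connected[OF convex_sector_cone[OF c(1)]]])
  show "complex_of_real ` {t<..} \<subseteq> sector_cone c"
    using c t by (auto intro: of_real_in_sector_cone)
  show "complex_of_real (t + 1) \<in> sector_cone c"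
    by (rule of_real_in_sector_cone) (use c t in auto)
  show "complex_of_real (t + 1) islimpt complex_of_real ` {t<..}"
    unfolding islimpt_approachable
  proof (intro allI impI)
    fix e :: real
    assume e: "0 < e"
    show "\<exists>x'\<in>complex_of_real ` {t<..}. x' \<noteq> complex_of_real (t + 1) \<and> dist x' (complex_of_real (t + 1)) < e"
    proof (rule bexI[of _ "of_real (t + 1 + min 1 e / 2)"])
      show "complex_of_real (t + 1 + min 1 e / 2) \<in> complex_of_real ` {t<..}"
        using e by (intro imageI) auto
    qed (use e in \<open>auto simp: dist_norm simp flip: of_real_diff\<close>)
  qed
qed (use vanish z in auto)


locale C0_semigroup_generator =
  fixes T :: "real \<Rightarrow> 'a::complex_hilbert \<Rightarrow> 'a" and A :: "'a \<Rightarrow> 'a" and DA :: "'a set"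
  assumes semigroup: "C0_semigroup T"
    and generator: "is_generator T DA (\<lambda>x. - A x)"
begin

lemma bounded_linear_T: "0 \<le> t \<Longrightarrow> bounded_linear (T t)"
  using semigroup cbounded_linear_imp_bounded_linear unfolding C0_semigroup_def by blast

lemma T_diff: "0 \<le> t \<Longrightarrow> T t (x - y) = T t x - T t y"
  using bounded_linear_T[THEN bounded_linear.linear] linear_diff by blast

lemma T_minus: "0 \<le> t \<Longrightarrow> T t (- x) = - T t x"
  using bounded_linear_T[THEN bounded_linear.linear] linear_neg by blast

lemma T_scaleR: "0 \<le> t \<Longrightarrow> T t (c *\<^sub>R x) = c *\<^sub>R T t x"
  using bounded_linear_T[THEN bounded_linear.linear] linear_scale by blast

lemma T_zero: "0 \<le> t \<Longrightarrow> T t 0 = 0"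
  using bounded_linear_T[THEN bounded_linear.linear] linear_0 by blast

lemma T_0 [simp]: "T 0 x = x"
  using semigroup unfolding C0_semigroup_def by simp

lemma T_add: "0 \<le> s \<Longrightarrow> 0 \<le> t \<Longrightarrow> T (s + t) x = T s (T t x)"
  using semigroup unfolding C0_semigroup_def by simp

lemma continuous_on_orbit: "continuous_on {0..} (\<lambda>t. T t x)"
  using semigroup unfolding C0_semigroup_def by simp

lemma orbit_tendsto_0: "((\<lambda>t. T t x) \<longlongrightarrow> x) (at_right 0)"
proof -
  have "((\<lambda>t. T t x) \<longlongrightarrow> T 0 x) (at 0 within {0..})"
    using continuous_on_orbit[of x] unfolding continuous_on_def by blast
  then show ?thesis
    by (simp add: at_within_Ici_at_right)
qed

lemma continuous_on_orbit_norm: "continuous_on {0..} (\<lambda>t. norm (T t x))"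
  by (intro continuous_intros continuous_on_orbit)

definition diff_quot :: "'a \<Rightarrow> real \<Rightarrow> 'a" where
  "diff_quot x h = (1 / h) *\<^sub>R (T h x - x)"

lemma generator_tendsto: "x \<in> DA \<Longrightarrow> (diff_quot x \<longlongrightarrow> - A x) (at_right 0)"
  using generator unfolding is_generator_def diff_quot_def by blast

lemma generator_if_tendsto:
  assumes "(diff_quot x \<longlongrightarrow> y) (at_right 0)"
  shows "x \<in> DA" "A x = - y"
proof -
  show x: "x \<in> DA"
    using assms generator unfolding is_generator_def diff_quot_def by blast
  have "- A x = y"
    using tendsto_unique[OF _ generator_tendsto[OF x] assms] by simp
  then show "A x = - y"
    by (metis minus_minus)
qed

lemma domain_scaleR:
  assumes "x \<in> DA"
  shows "c *\<^sub>R x \<in> DA" "A (c *\<^sub>R x) = c *\<^sub>R A x"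
proof -
  have "((\<lambda>h. c *\<^sub>R diff_quot x h) \<longlongrightarrow> c *\<^sub>R (- A x)) (at_right 0)"
    using generator_tendsto[OF assms] by (intro tendsto_scaleR) auto
  then have "(diff_quot (c *\<^sub>R x) \<longlongrightarrow> c *\<^sub>R (- A x)) (at_right 0)"
    by (rule Lim_transform_eventually)
       (use eventually_at_right_less[of 0] in \<open>eventually_elim, simp add: diff_quot_def T_scaleR algebra_simps\<close>)
  from generator_if_tendsto[OF this] show "c *\<^sub>R x \<in> DA" "A (c *\<^sub>R x) = c *\<^sub>R A x"
    by simp_all
qed

lemma domain_T:
  assumes "y \<in> DA" "0 \<le> r"
  shows "T r y \<in> DA" "A (T r y) = T r (A y)"
proof -
  have "((\<lambda>h. T r (diff_quot y h)) \<longlongrightarrow> T r (- A y)) (at_right 0)"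
    using generator_tendsto[OF assms(1)] bounded_linear.tendsto[OF bounded_linear_T[OF assms(2)]]
    by blast
  then have "(diff_quot (T r y) \<longlongrightarrow> T r (- A y)) (at_right 0)"
  proof (rule Lim_transform_eventually)
    show "\<forall>\<^sub>F h in at_right 0. T r (diff_quot y h) = diff_quot (T r y) h"
      using eventually_at_right_less[of 0]
    proof eventually_elim
      case (elim h)
      have "T h (T r y) = T r (T h y)"
        using T_add[of h r y] T_add[of r h y] elim assms by (simp add: add.commute)
      then show ?case
        using elim assms by (simp add: diff_quot_def T_scaleR T_diff)
    qed
  qed
  from generator_if_tendsto[OF this] show "T r y \<in> DA" "A (T r y) = T r (A y)"
    using T_minus assms by simp_all
qed

lemma has_vector_derivative_orbit_0:
  assumes "x \<in> DA"
  shows "((\<lambda>t. T t x) has_vector_derivative - A x) (at 0 within {0..})"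
  unfolding has_vector_derivative_def has_derivative_iff_norm at_within_Ici_at_right
proof (intro conjI)
  show "bounded_linear (\<lambda>h. h *\<^sub>R - A x)"
    by (rule bounded_linear_scaleR_left)
  have "((\<lambda>h. diff_quot x h - (- A x)) \<longlongrightarrow> 0) (at_right 0)"
    using tendsto_diff[OF generator_tendsto[OF assms] tendsto_const[of "- A x"]] by simp
  then have "((\<lambda>h. norm (diff_quot x h - (- A x))) \<longlongrightarrow> 0) (at_right 0)"
    by (rule tendsto_norm_zero)
  then show "((\<lambda>y. norm (T y x - T 0 x - (y - 0) *\<^sub>R - A x) / norm (y - 0)) \<longlongrightarrow> 0) (at_right 0)"
  proof (rule Lim_transform_eventually)
    show "\<forall>\<^sub>F y in at_right 0. norm (diff_quot x y - - A x) = norm (T y x - T 0 x - (y - 0) *\<^sub>R - A x) / norm (y - 0)"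
      using eventually_at_right_less[of 0]
    proof eventually_elim
      case (elim y)
      then have "diff_quot x y - - A x = (1 / y) *\<^sub>R (T y x - T 0 x - (y - 0) *\<^sub>R - A x)"
        by (simp add: diff_quot_def algebra_simps)
      then show ?case
        using elim by (simp add: divide_simps)
    qed
  qed
qed

definition log_convexity_criterion :: bool where
  "log_convexity_criterion \<longleftrightarrow> (\<forall>x. x \<in> DA \<and> A x \<in> DA \<and> norm x = 1 \<longrightarrow>
     2 * (Re (cinner (A x) x))\<^sup>2 \<le> Re (cinner (A (A x)) x) + (norm (A x))\<^sup>2)"

definition log_convex_orbits :: bool where
  "log_convex_orbits \<longleftrightarrow> (\<forall>u0. u0 \<noteq> 0 \<longrightarrow> (\<forall>r s t. 0 \<le> r \<and> r < s \<and> s < t \<longrightarrow>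
     norm (T s u0) \<le> norm (T r u0) powr ((t - s) / (t - r)) * norm (T t u0) powr ((s - r) / (t - r))))"

lemma log_convexity_criterion_homogeneous:
  assumes crit: log_convexity_criterion and y: "y \<in> DA" "A y \<in> DA" "y \<noteq> 0"
  shows "2 * (rinner (A y) y)\<^sup>2 \<le> (rinner (A (A y)) y + (norm (A y))\<^sup>2) * (norm y)\<^sup>2"
proof -
  define c where "c = 1 / norm y"
  have c: "0 < c" "c * norm y = 1"
    using y by (simp_all add: c_def)
  have Ay: "A (c *\<^sub>R y) = c *\<^sub>R A y" and AAy: "A (A (c *\<^sub>R y)) = c *\<^sub>R A (A y)"
    using domain_scaleR y by simp_all
  have "c *\<^sub>R y \<in> DA" "A (c *\<^sub>R y) \<in> DA" "norm (c *\<^sub>R y) = 1"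
    using domain_scaleR y c by simp_all
  then have "2 * (Re (cinner (A (c *\<^sub>R y)) (c *\<^sub>R y)))\<^sup>2
      \<le> Re (cinner (A (A (c *\<^sub>R y))) (c *\<^sub>R y)) + (norm (A (c *\<^sub>R y)))\<^sup>2"
    using crit unfolding log_convexity_criterion_def by blast
  then have "2 * (c\<^sup>2 * rinner (A y) y)\<^sup>2 \<le> c\<^sup>2 * (rinner (A (A y)) y + (norm (A y))\<^sup>2)"
    unfolding AAy unfolding Ay rinner_def[symmetric] using c
    by (simp add: rinner_simps power2_eq_square algebra_simps)
  then have "2 * (c\<^sup>2 * rinner (A y) y)\<^sup>2 * (norm y)\<^sup>2 * (norm y)\<^sup>2
      \<le> c\<^sup>2 * (rinner (A (A y)) y + (norm (A y))\<^sup>2) * (norm y)\<^sup>2 * (norm y)\<^sup>2"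
    by (simp add: mult_right_mono)
  also have "2 * (c\<^sup>2 * rinner (A y) y)\<^sup>2 * (norm y)\<^sup>2 * (norm y)\<^sup>2 = 2 * (rinner (A y) y)\<^sup>2"
    using c(2) by (simp add: power2_eq_square algebra_simps) (metis mult.assoc mult_1)
  also have "c\<^sup>2 * (rinner (A (A y)) y + (norm (A y))\<^sup>2) * (norm y)\<^sup>2 * (norm y)\<^sup>2
      = (rinner (A (A y)) y + (norm (A y))\<^sup>2) * (norm y)\<^sup>2"
    using c(2) by (simp add: power2_eq_square algebra_simps) (metis mult.assoc mult_1)
  finally show ?thesis .
qed

lemma Re_numerical_range_normalized:
  assumes "y \<in> DA" "y \<noteq> 0"
  shows "rinner (A y) y / (norm y)\<^sup>2 \<in> Re ` numerical_range DA A"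
proof -
  define c where "c = 1 / norm y"
  have "c *\<^sub>R y \<in> DA" "norm (c *\<^sub>R y) = 1"
    using domain_scaleR assms by (simp_all add: c_def)
  then have "cinner (A (c *\<^sub>R y)) (c *\<^sub>R y) \<in> numerical_range DA A"
    unfolding numerical_range_def by blast
  moreover have "Re (cinner (A (c *\<^sub>R y)) (c *\<^sub>R y)) = rinner (A y) y / (norm y)\<^sup>2"
    using domain_scaleR assms
    by (simp add: c_def rinner_def[symmetric] rinner_simps power2_eq_square)
  ultimately show ?thesis
    by (metis image_eqI)
qed

lemma rinner_A_pos:
  assumes "numerical_range DA A \<subseteq> {z. 0 < Re z}" "y \<in> DA" "y \<noteq> 0"
  shows "0 < rinner (A y) y"
proof -
  have "0 < rinner (A y) y / (norm y)\<^sup>2"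
    using Re_numerical_range_normalized[OF assms(2,3)] assms(1) by auto
  then show ?thesis
    using assms(3) by (simp add: zero_less_divide_iff)
qed

lemma num_lower_bound_le:
  assumes "numerical_range DA A \<subseteq> {z. 0 < Re z}" "y \<in> DA" "y \<noteq> 0"
  shows "num_lower_bound DA A * (norm y)\<^sup>2 \<le> rinner (A y) y"
proof -
  have "num_lower_bound DA A \<le> rinner (A y) y / (norm y)\<^sup>2"
    unfolding num_lower_bound_def
    using Re_numerical_range_normalized[OF assms(2,3)] assms(1)
    by (intro cInf_lower) (auto intro!: bdd_belowI[of _ 0] less_imp_le)
  then show ?thesis
    using assms(3) by (simp add: field_simps)
qed

end


section \<open>Holomorphic semigroups\<close>

locale holomorphic_C0_semigroup_generator = C0_semigroup_generator +
  assumes holomorphic: "holomorphic_semigroup T"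
begin

lemma obtain_cone_extension:
  obtains c F where "0 \<le> c" "c < 1" "\<And>t. 0 < t \<Longrightarrow> F (complex_of_real t) = T t"
    "\<And>z. z \<in> sector_cone c \<Longrightarrow> cbounded_linear (F z)" "op_holomorphic_on F (sector_cone c)"
proof -
  obtain \<delta> F where \<delta>: "0 < \<delta>" and FT: "\<forall>t>0. F (complex_of_real t) = T t"
    and bl: "\<forall>z\<in>sector \<delta>. cbounded_linear (F z)" and hol: "op_holomorphic_on F (sector \<delta>)"
    using holomorphic unfolding holomorphic_semigroup_def by blast
  define d where "d = min \<delta> (pi / 2)"
  have d: "0 < d" "d \<le> pi / 2"
    using \<delta> by (auto simp: d_def)
  have "sector d \<subseteq> sector \<delta>"
    by (auto simp: sector_def d_def)
  with sector_cone_subset_sector[OF d] have sub: "sector_cone (cos d) \<subseteq> sector \<delta>"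
    by blast
  have "0 \<le> cos d"
    using d by (intro cos_ge_zero) auto
  moreover have "cos d < 1"
    using d cos_mono_less_eq[of d 0] by simp
  ultimately show ?thesis
    using that FT bl sub op_holomorphic_on_subset[OF hol sub] by blast
qed

lemma orbit_differentiable:
  assumes "0 < t"
  shows "\<exists>D. ((\<lambda>\<tau>. T \<tau> y) has_vector_derivative D) (at t)"
proof -
  obtain c F where c: "c < 1" and FT: "\<And>t. 0 < t \<Longrightarrow> F (complex_of_real t) = T t"
    and bl: "\<And>z. z \<in> sector_cone c \<Longrightarrow> cbounded_linear (F z)"
    and hol: "op_holomorphic_on F (sector_cone c)"
    by (rule obtain_cone_extension) blast
  obtain D where D: "((\<lambda>\<tau>. F (of_real \<tau>) y) has_vector_derivative D) (at t)"
    using op_holomorphic_on_has_vector_derivative[OF open_sector_cone bl hol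
        of_real_in_sector_cone[OF c assms]] by blast
  have "((\<lambda>\<tau>. T \<tau> y) has_vector_derivative D) (at t)"
    by (rule has_vector_derivative_transform_within_open[OF D, of "{0<..}"]) (use FT assms in auto)
  then show ?thesis
    by blast
qed

lemma orbit_derivative:
  assumes "0 < t"
  shows "T t y \<in> DA" "((\<lambda>\<tau>. T \<tau> y) has_vector_derivative - A (T t y)) (at t)"
proof -
  obtain D where D: "((\<lambda>\<tau>. T \<tau> y) has_vector_derivative D) (at t)"
    using orbit_differentiable[OF assms] by blast
  have "(diff_quot (T t y) \<longlongrightarrow> D) (at_right 0)"
    using has_vector_derivative_right_quotient[OF D]
  proof (rule Lim_transform_eventually)
    show "\<forall>\<^sub>F h in at_right 0. (1 / h) *\<^sub>R (T (t + h) y - T t y) = diff_quot (T t y) h"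
      using eventually_at_right_less[of 0]
      by eventually_elim (use assms in \<open>simp add: diff_quot_def T_add add.commute\<close>)
  qed
  from generator_if_tendsto[OF this] D
  show "T t y \<in> DA" "((\<lambda>\<tau>. T \<tau> y) has_vector_derivative - A (T t y)) (at t)"
    by simp_all
qed

lemma has_vector_derivative_orbit:
  assumes "x \<in> DA" "0 \<le> t"
  shows "((\<lambda>t. T t x) has_vector_derivative - T t (A x)) (at t within {0..})"
proof (cases "t = 0")
  case True
  then show ?thesis
    using has_vector_derivative_orbit_0[OF assms(1)] by simp
next
  case False
  then have "0 < t"
    using assms by simp
  then show ?thesis
    using orbit_derivative(2)[of t x] domain_T(2)[OF assms]
    by (simp add: has_vector_derivative_at_within)
qed

text \<open>With \<open>F\<close> the holomorphic extension of \<open>T\<close>, the function \<open>w \<mapsto> cinner (F w y) v\<close> vanishes on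
  the ray \<open>]t, \<infinity>[\<close>, hence on the whole sector, in particular on \<open>]0, t]\<close>.\<close>

lemma backward_uniqueness:
  assumes "0 \<le> t" "T t y = 0"
  shows "y = 0"
proof (cases "t = 0")
  case False
  obtain c F where c: "0 \<le> c" "c < 1" and FT: "\<And>t. 0 < t \<Longrightarrow> F (complex_of_real t) = T t"
    and bl: "\<And>z. z \<in> sector_cone c \<Longrightarrow> cbounded_linear (F z)"
    and hol: "op_holomorphic_on F (sector_cone c)"
    by (rule obtain_cone_extension) blast
  have orthogonal: "cinner (T s y) v = 0" if s: "0 < s" for s v
  proof -
    have "cinner (F (of_real r) y) v = 0" if "t < r" for r
    proof -
      have "T r y = T (r - t) (T t y)"
        using T_add[of "r - t" t y] that assms by simp
      then show ?thesis
        using FT[of r] that assms T_zero[of "r - t"] by simp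
    qed
    then have "cinner (F (of_real s) y) v = 0"
      using holomorphic_vanishing_on_ray[OF holomorphic_on_cinner[OF open_sector_cone bl hol] c assms(1)]
        of_real_in_sector_cone[OF c(2) s] by blast
    then show ?thesis
      using FT s by simp
  qed
  have "\<forall>\<^sub>F s in at_right 0. T s y = 0"
    using eventually_at_right_less[of 0]
    by eventually_elim (metis orthogonal cinner_self_norm norm_eq_zero of_real_eq_0_iff zero_eq_power2)
  then have "((\<lambda>s. T s y) \<longlongrightarrow> 0) (at_right 0)"
    by (rule tendsto_eventually)
  then show ?thesis
    using orbit_tendsto_0[of y] tendsto_unique by force
qed (use assms in simp)

lemma orbit_neq_0: "x \<noteq> 0 \<Longrightarrow> 0 \<le> t \<Longrightarrow> T t x \<noteq> 0"
  using backward_uniqueness by blast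

definition A_orbit :: "nat \<Rightarrow> 'a \<Rightarrow> real \<Rightarrow> 'a" where
  "A_orbit n x t = (A ^^ n) (T t x)"

lemma A_orbit_0 [simp]: "A_orbit 0 x t = T t x"
  by (simp add: A_orbit_def)

lemma A_orbit_Suc: "A_orbit (Suc n) x t = A (A_orbit n x t)"
  by (simp add: A_orbit_def)

lemma A_orbit_in_domain_and_shift:
  assumes "0 < s"
  shows "A_orbit n x s \<in> DA \<and> (\<forall>r\<ge>0. A_orbit n x (s + r) = T r (A_orbit n x s))"
  using assms
proof (induction n arbitrary: s)
  case 0
  then show ?case
    using orbit_derivative(1)[of s x] T_add[of _ s x] by (simp add: add.commute)
next
  case (Suc n)
  have half: "0 < s / 2"
    using Suc.prems by simp
  then have "A_orbit n x s = T (s / 2) (A_orbit n x (s / 2))"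
    using Suc.IH[OF half] by (metis field_sum_of_halves less_eq_real_def)
  then have "A_orbit (Suc n) x s = T (s / 2) (A (A_orbit n x (s / 2)))"
    using domain_T(2)[of "A_orbit n x (s / 2)" "s / 2"] Suc.IH[OF half] half by (simp add: A_orbit_Suc)
  then have "A_orbit (Suc n) x s \<in> DA"
    using orbit_derivative(1)[OF half] by simp
  moreover have "A_orbit (Suc n) x (s + r) = T r (A_orbit (Suc n) x s)" if "0 \<le> r" for r
    using Suc.IH[OF Suc.prems] domain_T(2)[of "A_orbit n x s" r] that by (simp add: A_orbit_Suc)
  ultimately show ?case
    by blast
qed

lemma A_orbit_in_domain: "0 < t \<Longrightarrow> A_orbit n x t \<in> DA"
  using A_orbit_in_domain_and_shift by blast

lemma has_vector_derivative_A_orbit: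
  assumes "0 < t"
  shows "(A_orbit n x has_vector_derivative - A_orbit (Suc n) x t) (at t)"
proof -
  define s where "s = t / 2"
  have s: "0 < s" "s < t"
    using assms by (auto simp: s_def)
  let ?y = "A_orbit n x s"
  have shift: "A_orbit n x \<tau> = T (\<tau> - s) ?y" if "s < \<tau>" for \<tau>
    using A_orbit_in_domain_and_shift[OF s(1), of n x] that
    by (metis add.commute diff_add_cancel diff_ge_0_iff_ge less_eq_real_def)
  have "((\<lambda>\<tau>. \<tau> - s) has_vector_derivative 1) (at t)"
    unfolding has_real_derivative_iff_has_vector_derivative[symmetric]
    by (auto intro!: derivative_eq_intros)
  from vector_diff_chain_at[OF this orbit_derivative(2)[of "t - s" ?y]]
  have "((\<lambda>\<tau>. T (\<tau> - s) ?y) has_vector_derivative - A_orbit (Suc n) x t) (at t)"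
    using s shift[of t] by (simp add: o_def A_orbit_Suc)
  then show ?thesis
    by (rule has_vector_derivative_transform_within_open[of _ _ _ "{s<..}"]) (use s shift in auto)
qed

lemma has_real_derivative_orbit_norm:
  assumes "x \<noteq> 0" "0 < t"
  shows "((\<lambda>t. norm (T t x)) has_real_derivative - rinner (A (T t x)) (T t x) / norm (T t x)) (at t)"
  using has_real_derivative_norm[OF orbit_derivative(2)[OF assms(2)] orbit_neq_0[OF assms(1)]] assms(2)
  by (simp add: rinner_minus_left)

text \<open>This class is closed under differentiation on \<open>]0, \<infinity>[\<close>, which makes the norm of the orbit
  \<open>C\<^sup>\<infinity>\<close> there.\<close>

inductive orbit_algebra :: "'a \<Rightarrow> (real \<Rightarrow> real) \<Rightarrow> bool" for x where
  norm_orbit: "orbit_algebra x (\<lambda>t. norm (T t x))"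
| inverse_norm_orbit: "orbit_algebra x (\<lambda>t. 1 / norm (T t x))"
| rinner_A_orbit: "orbit_algebra x (\<lambda>t. rinner (A_orbit i x t) (A_orbit j x t))"
| const: "orbit_algebra x (\<lambda>t. c)"
| add: "orbit_algebra x f \<Longrightarrow> orbit_algebra x g \<Longrightarrow> orbit_algebra x (\<lambda>t. f t + g t)"
| mult: "orbit_algebra x f \<Longrightarrow> orbit_algebra x g \<Longrightarrow> orbit_algebra x (\<lambda>t. f t * g t)"

lemma orbit_algebra_has_derivative:
  assumes "x \<noteq> 0" "orbit_algebra x f"
  shows "\<exists>g. orbit_algebra x g \<and> (\<forall>t>0. (f has_real_derivative g t) (at t))"
  using assms(2)
proof induction
  case norm_orbit
  show ?case
  proof (intro exI conjI allI impI)
    show "orbit_algebra x (\<lambda>t. - 1 * rinner (A_orbit 1 x t) (A_orbit 0 x t) * (1 / norm (T t x)))"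
      by (intro orbit_algebra.intros)
    fix t :: real
    assume "0 < t"
    then show "((\<lambda>t. norm (T t x)) has_real_derivative
        - 1 * rinner (A_orbit 1 x t) (A_orbit 0 x t) * (1 / norm (T t x))) (at t)"
      using has_real_derivative_orbit_norm[OF assms(1)] by (simp add: A_orbit_def)
  qed
next
  case inverse_norm_orbit
  show ?case
  proof (intro exI conjI allI impI)
    show "orbit_algebra x (\<lambda>t. rinner (A_orbit 1 x t) (A_orbit 0 x t)
        * (1 / norm (T t x)) * (1 / norm (T t x)) * (1 / norm (T t x)))"
      by (intro orbit_algebra.intros)
    fix t :: real
    assume t: "0 < t"
    have "norm (T t x) \<noteq> 0"
      using orbit_neq_0[OF assms(1)] t by simp
    with DERIV_inverse_fun[OF has_real_derivative_orbit_norm[OF assms(1) t]]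
    show "((\<lambda>t. 1 / norm (T t x)) has_real_derivative rinner (A_orbit 1 x t) (A_orbit 0 x t)
        * (1 / norm (T t x)) * (1 / norm (T t x)) * (1 / norm (T t x))) (at t)"
      by (simp add: A_orbit_def divide_inverse mult.assoc)
  qed
next
  case (rinner_A_orbit i j)
  show ?case
  proof (intro exI conjI allI impI)
    show "orbit_algebra x (\<lambda>t. - 1 * (rinner (A_orbit i x t) (A_orbit (Suc j) x t)
        + rinner (A_orbit (Suc i) x t) (A_orbit j x t)))"
      by (intro orbit_algebra.intros)
    fix t :: real
    assume t: "0 < t"
    show "((\<lambda>t. rinner (A_orbit i x t) (A_orbit j x t)) has_real_derivative
        - 1 * (rinner (A_orbit i x t) (A_orbit (Suc j) x t) + rinner (A_orbit (Suc i) x t) (A_orbit j x t))) (at t)"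
      using has_real_derivative_rinner[OF has_vector_derivative_A_orbit[OF t] has_vector_derivative_A_orbit[OF t]]
      by (simp add: rinner_minus_left rinner_minus_right)
  qed
next
  case (const c)
  show ?case
    by (intro exI[of _ "\<lambda>t. 0"] conjI allI impI orbit_algebra.const DERIV_const)
next
  case (add f g)
  then obtain f' g' where "orbit_algebra x f'" "\<forall>t>0. (f has_real_derivative f' t) (at t)"
    "orbit_algebra x g'" "\<forall>t>0. (g has_real_derivative g' t) (at t)"
    by blast
  then show ?case
    by (intro exI[of _ "\<lambda>t. f' t + g' t"] conjI allI impI orbit_algebra.add DERIV_add) auto
next
  case (mult f g)
  then obtain f' g' where "orbit_algebra x f'" "\<forall>t>0. (f has_real_derivative f' t) (at t)"
    "orbit_algebra x g'" "\<forall>t>0. (g has_real_derivative g' t) (at t)"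
    by blast
  then show ?case
    using mult.hyps
    by (intro exI[of _ "\<lambda>t. f' t * g t + g' t * f t"] conjI allI impI orbit_algebra.intros DERIV_mult) auto
qed

lemma orbit_algebra_higher_deriv:
  assumes "x \<noteq> 0" "orbit_algebra x f"
  shows "\<exists>g. orbit_algebra x g \<and> (\<forall>t>0. (deriv ^^ n) f t = g t)"
proof (induction n)
  case (Suc n)
  then obtain g where g: "orbit_algebra x g" "\<forall>t>0. (deriv ^^ n) f t = g t"
    by blast
  obtain g' where g': "orbit_algebra x g'" "\<forall>t>0. (g has_real_derivative g' t) (at t)"
    using orbit_algebra_has_derivative[OF assms(1) g(1)] by blast
  have "(deriv ^^ Suc n) f t = g' t" if t: "0 < t" for t
  proof -
    have "((deriv ^^ n) f has_real_derivative g' t) (at t)"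
      by (rule has_field_derivative_transform_within_open[OF g'(2)[rule_format, OF t], of "{0<..}"])
         (use g(2) t in auto)
    then show ?thesis
      by (simp add: DERIV_imp_deriv)
  qed
  then show ?case
    using g'(1) by blast
qed (use assms in auto)

lemma orbit_norm_higher_deriv_differentiable:
  assumes "x \<noteq> 0" "0 < t"
  shows "(deriv ^^ n) (\<lambda>t. norm (T t x)) differentiable (at t)"
proof -
  obtain g where g: "orbit_algebra x g" "\<forall>t>0. (deriv ^^ n) (\<lambda>t. norm (T t x)) t = g t"
    using orbit_algebra_higher_deriv[OF assms(1) orbit_algebra.norm_orbit] by blast
  obtain g' where g': "\<forall>t>0. (g has_real_derivative g' t) (at t)"
    using orbit_algebra_has_derivative[OF assms(1) g(1)] by blast
  have "((deriv ^^ n) (\<lambda>t. norm (T t x)) has_real_derivative g' t) (at t)"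
    by (rule has_field_derivative_transform_within_open[OF g'[rule_format, OF assms(2)], of "{0<..}"])
       (use g(2) assms(2) in auto)
  then show ?thesis
    unfolding has_field_derivative_def by (rule differentiableI)
qed


section \<open>Log-convexity of orbit norms\<close>

lemma A_orbit_1: "A_orbit 1 x t = A (T t x)"
  by (simp add: A_orbit_def)

lemma has_vector_derivative_A_orbit_1:
  "0 < t \<Longrightarrow> ((\<lambda>t. A (T t x)) has_vector_derivative - A (A (T t x))) (at t)"
  using has_vector_derivative_A_orbit[of t 1 x] by (simp add: A_orbit_def[abs_def])

lemma has_real_derivative_ln_orbit_norm:
  assumes x: "x \<noteq> 0" and t: "0 < t"
  shows "((\<lambda>t. ln (norm (T t x))) has_real_derivative
    - rinner (A (T t x)) (T t x) / (norm (T t x))\<^sup>2) (at t)"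
proof -
  have "0 < norm (T t x)"
    using orbit_neq_0[OF x] t by simp
  from DERIV_chain2[OF DERIV_ln[OF this] has_real_derivative_orbit_norm[OF x t]]
  show ?thesis
    by (simp add: power2_eq_square field_simps)
qed

text \<open>With \<open>u = T t x\<close>, the second derivative of \<open>ln \<bar>T t x\<bar>\<close> is
  \<open>(Re \<langle>A\<^sup>2 u, u\<rangle> + \<bar>A u\<bar>\<^sup>2) / \<bar>u\<bar>\<^sup>2 - 2 (Re \<langle>A u, u\<rangle> / \<bar>u\<bar>\<^sup>2)\<^sup>2\<close>, so its sign is that of the criterion
  at \<open>u / \<bar>u\<bar>\<close>.\<close>

lemma log_derivative_orbit_norm_has_nonneg_derivative:
  assumes crit: log_convexity_criterion and x: "x \<noteq> 0" and t: "0 < t"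
  shows "\<exists>y. ((\<lambda>t. - rinner (A (T t x)) (T t x) / (norm (T t x))\<^sup>2) has_real_derivative y) (at t)
    \<and> 0 \<le> y"
proof -
  let ?u = "T t x"
  define N where "N t = rinner (A (T t x)) (T t x)" for t
  define D where "D t = rinner (T t x) (T t x)" for t
  have D: "D t = (norm ?u)\<^sup>2" "0 < D t"
    using orbit_neq_0[OF x] t by (simp_all add: D_def rinner_self)
  have dN: "(N has_real_derivative rinner (A ?u) (- A ?u) + rinner (- A (A ?u)) ?u) (at t)"
    unfolding N_def[abs_def]
    by (rule has_real_derivative_rinner[OF has_vector_derivative_A_orbit_1[OF t] orbit_derivative(2)[OF t]])
  have dD: "(D has_real_derivative rinner ?u (- A ?u) + rinner (- A ?u) ?u) (at t)"
    unfolding D_def[abs_def]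
    by (rule has_real_derivative_rinner[OF orbit_derivative(2)[OF t] orbit_derivative(2)[OF t]])
  have crit_u: "2 * (N t)\<^sup>2 \<le> (rinner (A (A ?u)) ?u + (norm (A ?u))\<^sup>2) * D t"
    using log_convexity_criterion_homogeneous[OF crit orbit_derivative(1)[OF t]
        A_orbit_in_domain[OF t, of 1 x, unfolded A_orbit_1] orbit_neq_0[OF x less_imp_le[OF t]]] D
    by (simp add: N_def)
  have "(\<lambda>t. - rinner (A (T t x)) (T t x) / (norm (T t x))\<^sup>2) = (\<lambda>t. - N t / D t)"
    by (simp add: N_def D_def rinner_self)
  moreover have "((\<lambda>t. - N t / D t) has_real_derivative
      (- (rinner (A ?u) (- A ?u) + rinner (- A (A ?u)) ?u) * D t
        - - N t * (rinner ?u (- A ?u) + rinner (- A ?u) ?u)) / (D t * D t)) (at t)"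
    by (rule DERIV_divide[OF DERIV_minus[OF dN] dD]) (use D in simp)
  moreover have "0 \<le> (- (rinner (A ?u) (- A ?u) + rinner (- A (A ?u)) ?u) * D t
      - - N t * (rinner ?u (- A ?u) + rinner (- A ?u) ?u)) / (D t * D t)"
    using crit_u
    by (simp add: rinner_minus_left rinner_minus_right rinner_commute[of ?u "A ?u"]
        rinner_self N_def power2_eq_square algebra_simps)
  ultimately show ?thesis
    by auto
qed

lemma convex_on_ln_orbit_norm:
  assumes crit: log_convexity_criterion and x: "x \<noteq> 0"
  shows "convex_on {0<..} (\<lambda>t. ln (norm (T t x)))"
proof (rule convex_on_realI)
  let ?p = "\<lambda>t. - rinner (A (T t x)) (T t x) / (norm (T t x))\<^sup>2"
  show "((\<lambda>t. ln (norm (T t x))) has_real_derivative ?p t) (at t)" if "t \<in> {0<..}" for t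
    using has_real_derivative_ln_orbit_norm[OF x] that by simp
  show "?p a \<le> ?p b" if ab: "a \<in> {0<..}" "b \<in> {0<..}" "a \<le> b" for a b
  proof (rule DERIV_nonneg_imp_increasing_open[OF ab(3)])
    show "\<exists>y. (?p has_real_derivative y) (at t) \<and> 0 \<le> y" if "a < t" "t < b" for t
      using log_derivative_orbit_norm_has_nonneg_derivative[OF crit x] that ab by simp
    show "continuous_on {a..b} ?p"
    proof (rule DERIV_atLeastAtMost_imp_continuous_on)
      fix t
      assume "a \<le> t" "t \<le> b"
      then have "0 < t"
        using ab by simp
      then show "\<exists>y. (?p has_real_derivative y) (at t)"
        using log_derivative_orbit_norm_has_nonneg_derivative[OF crit x] by blast
    qed
  qed
qed simp

lemma log_convex_orbits_iff:
  "log_convex_orbits \<longleftrightarrow> (\<forall>x. x \<noteq> 0 \<longrightarrow> convex_on {0..} (\<lambda>t. ln (norm (T t x))))"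
proof -
  have "convex_on {0..} (\<lambda>t. ln (norm (T t x))) \<longleftrightarrow> (\<forall>r s t. 0 \<le> r \<and> r < s \<and> s < t \<longrightarrow>
      norm (T s x) \<le> norm (T r x) powr ((t - s) / (t - r)) * norm (T t x) powr ((s - r) / (t - r)))"
    if "x \<noteq> 0" for x
    by (rule convex_on_ln_iff_powr) (use orbit_neq_0[OF that] in simp)
  then show ?thesis
    unfolding log_convex_orbits_def by blast
qed

lemma criterion_imp_log_convex_orbits:
  assumes log_convexity_criterion
  shows log_convex_orbits
  unfolding log_convex_orbits_iff
proof (intro allI impI)
  fix x :: 'a
  assume x: "x \<noteq> 0"
  have "((\<lambda>t. ln (norm (T t x))) \<longlongrightarrow> ln (norm (T 0 x))) (at_right 0)"
    using x by (auto intro!: tendsto_intros orbit_tendsto_0)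
  then show "convex_on {0..} (\<lambda>t. ln (norm (T t x)))"
    by (rule convex_on_atLeast_if_greaterThan[OF convex_on_ln_orbit_norm[OF assms x]])
qed

lemma orbit_taylor2:
  assumes "x \<in> DA" "A x \<in> DA"
  shows "((\<lambda>s. (1 / s\<^sup>2) *\<^sub>R (T s x - (x + s *\<^sub>R - A x + (s\<^sup>2 / 2) *\<^sub>R A (A x)))) \<longlongrightarrow> 0) (at_right 0)"
proof -
  have "((\<lambda>\<tau>. (1 / \<tau>) *\<^sub>R (- T \<tau> (A x) - - T 0 (A x))) \<longlongrightarrow> - (- A (A x))) (at_right 0)"
    using tendsto_minus[OF generator_tendsto[OF assms(2)]] by (simp add: diff_quot_def algebra_simps)
  from taylor2_at_right_0[OF has_vector_derivative_orbit[OF assms(1)] this]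
  show ?thesis
    by simp
qed

lemma orbit_norm_sq_expansion:
  assumes "x \<in> DA" "A x \<in> DA"
  obtains q where "(q \<longlongrightarrow> 0) (at_right 0)"
    "\<And>s. 0 < s \<Longrightarrow> (norm (T s x))\<^sup>2 = (norm x)\<^sup>2 - 2 * rinner (A x) x * s
       + ((norm (A x))\<^sup>2 + rinner (A (A x)) x) * s\<^sup>2 + s\<^sup>2 * q s"
proof -
  let ?w1 = "A x" and ?w2 = "A (A x)"
  define p where "p s = x + s *\<^sub>R - ?w1 + (s\<^sup>2 / 2) *\<^sub>R ?w2" for s
  define E where "E s = (1 / s\<^sup>2) *\<^sub>R (T s x - p s)" for s
  define q where "q s = - s * rinner ?w1 ?w2 + s\<^sup>2 / 4 * rinner ?w2 ?w2
    + 2 * rinner (p s) (E s) + s\<^sup>2 * rinner (E s) (E s)" for s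
  have E: "(E \<longlongrightarrow> 0) (at_right 0)"
    unfolding E_def p_def by (rule orbit_taylor2[OF assms])
  have "(p \<longlongrightarrow> x) (at_right 0)"
    unfolding p_def by (auto intro!: tendsto_eq_intros)
  then have "(q \<longlongrightarrow> - 0 * rinner ?w1 ?w2 + 0\<^sup>2 / 4 * rinner ?w2 ?w2 + 2 * rinner x 0 + 0\<^sup>2 * rinner 0 0)
      (at_right 0)"
    unfolding q_def[abs_def]
    using bounded_bilinear.tendsto[OF bounded_bilinear_rinner _ E]
      bounded_bilinear.tendsto[OF bounded_bilinear_rinner E E]
    by (intro tendsto_intros) auto
  moreover have "(norm (T s x))\<^sup>2 = (norm x)\<^sup>2 - 2 * rinner ?w1 x * s
      + ((norm ?w1)\<^sup>2 + rinner ?w2 x) * s\<^sup>2 + s\<^sup>2 * q s" if s: "0 < s" for s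
  proof -
    have "T s x = p s + s\<^sup>2 *\<^sub>R E s"
      using s by (simp add: E_def)
    then have "(norm (T s x))\<^sup>2 = rinner (p s) (p s) + 2 * s\<^sup>2 * rinner (p s) (E s)
        + s\<^sup>2 * s\<^sup>2 * rinner (E s) (E s)"
      by (simp add: rinner_self[symmetric] rinner_simps rinner_commute[of "E s" "p s"] algebra_simps)
    moreover have "rinner (p s) (p s) = (norm x)\<^sup>2 - 2 * rinner ?w1 x * s
        + ((norm ?w1)\<^sup>2 + rinner ?w2 x) * s\<^sup>2 - s ^ 3 * rinner ?w1 ?w2 + s ^ 4 / 4 * rinner ?w2 ?w2"
      unfolding p_def rinner_simps
      by (simp add: rinner_self rinner_commute[of x ?w1]
          rinner_commute[of x ?w2] rinner_commute[of ?w2 ?w1] power2_eq_square power3_eq_cube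
          power4_eq_xxxx field_simps)
    ultimately show ?thesis
      by (simp add: q_def power2_eq_square power3_eq_cube power4_eq_xxxx field_simps)
  qed
  ultimately show thesis
    using that by simp
qed

lemma log_convex_orbits_midpoint:
  assumes log_convex: log_convex_orbits and x: "x \<noteq> 0" and s: "0 < s"
  shows "(norm (T s x))\<^sup>2 \<le> norm x * norm (T (2 * s) x)"
proof -
  have "norm (T s x) \<le> norm (T 0 x) powr ((2 * s - s) / (2 * s - 0))
      * norm (T (2 * s) x) powr ((s - 0) / (2 * s - 0))"
    using log_convex[unfolded log_convex_orbits_def, rule_format, of x 0 s "2 * s"] x s by simp
  also have "\<dots> = sqrt (norm x * norm (T (2 * s) x))"
    using s by (simp add: powr_half_sqrt real_sqrt_mult)
  finally show ?thesis
    by (metis norm_ge_zero power_mono real_sqrt_pow2 zero_le_mult_iff)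
qed

lemma log_convex_orbits_imp_criterion:
  assumes log_convex: log_convex_orbits
  shows log_convexity_criterion
  unfolding log_convexity_criterion_def
proof (intro allI impI, elim conjE)
  fix x
  assume x: "x \<in> DA" "A x \<in> DA" "norm x = 1"
  define a where "a = - 2 * rinner (A x) x"
  define b where "b = (norm (A x))\<^sup>2 + rinner (A (A x)) x"
  define \<phi> where "\<phi> s = (norm (T s x))\<^sup>2" for s
  obtain q where q: "(q \<longlongrightarrow> 0) (at_right 0)"
    and expansion: "\<And>s. 0 < s \<Longrightarrow> \<phi> s = 1 + a * s + b * s\<^sup>2 + s\<^sup>2 * q s"
    using orbit_norm_sq_expansion[OF x(1,2)] x(3) unfolding \<phi>_def a_def b_def by auto
  have midpoint: "(\<phi> s)\<^sup>2 \<le> \<phi> (2 * s)" if s: "0 < s" for s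
  proof -
    have "x \<noteq> 0"
      using x(3) by auto
    from power_mono[OF log_convex_orbits_midpoint[OF log_convex this s] zero_le_power2, of 2]
    show ?thesis
      unfolding \<phi>_def using x(3) by simp
  qed
  have "\<forall>\<^sub>F s in at_right 0. 0 \<le> 2 * b + 4 * q (2 * s) - 2 * q s - (a + b * s + s * q s)\<^sup>2"
    using eventually_at_right_less[of 0]
  proof eventually_elim
    case (elim s)
    have "2 * b + 4 * q (2 * s) - 2 * q s - (a + b * s + s * q s)\<^sup>2 = (\<phi> (2 * s) - (\<phi> s)\<^sup>2) / s\<^sup>2"
      using elim by (simp add: expansion field_simps power2_eq_square)
    then show ?case
      using midpoint[OF elim] by simp
  qed
  moreover have "filterlim (\<lambda>s::real. 2 * s) (at_right 0) (at_right 0)"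
    unfolding filterlim_at
    by (auto intro!: tendsto_eq_intros eventually_mono[OF eventually_at_right_less[of 0]])
  then have "((\<lambda>s. 2 * b + 4 * q (2 * s) - 2 * q s - (a + b * s + s * q s)\<^sup>2)
      \<longlongrightarrow> 2 * b + 4 * 0 - 2 * 0 - (a + b * 0 + 0 * 0)\<^sup>2) (at_right 0)"
    by (intro tendsto_intros q filterlim_compose[OF q])
  ultimately have "0 \<le> 2 * b - a\<^sup>2"
    by (intro tendsto_lowerbound) auto
  then show "2 * (Re (cinner (A x) x))\<^sup>2 \<le> Re (cinner (A (A x)) x) + (norm (A x))\<^sup>2"
    by (simp add: a_def b_def rinner_def power2_eq_square)
qed

section \<open>Positively accretive generators\<close>

lemma orbit_norm_strict_decreasing:
  assumes NR: "numerical_range DA A \<subseteq> {z. 0 < Re z}" and x: "x \<noteq> 0" and st: "0 \<le> s" "s < t"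
  shows "norm (T t x) < norm (T s x)"
proof (rule DERIV_neg_imp_decreasing_open[OF st(2)])
  fix \<tau>
  assume "s < \<tau>" "\<tau> < t"
  then have \<tau>: "0 < \<tau>"
    using st by simp
  have "0 < rinner (A (T \<tau> x)) (T \<tau> x)"
    using rinner_A_pos[OF NR orbit_derivative(1)[OF \<tau>] orbit_neq_0[OF x]] \<tau> by simp
  moreover have "0 < norm (T \<tau> x)"
    using orbit_neq_0[OF x] \<tau> by simp
  ultimately show "\<exists>d. ((\<lambda>t. norm (T t x)) has_real_derivative d) (at \<tau>) \<and> d < 0"
    using has_real_derivative_orbit_norm[OF x \<tau>] by (intro exI conjI) auto
next
  show "continuous_on {s..t} (\<lambda>t. norm (T t x))"
    by (rule continuous_on_subset[OF continuous_on_orbit_norm]) (use st in auto)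
qed

text \<open>A strictly decreasing log-convex function is strictly convex, by the strict inequality between
  weighted geometric and arithmetic means.\<close>

lemma strictly_convex_on_orbit_norm:
  assumes NR: "numerical_range DA A \<subseteq> {z. 0 < Re z}" and log_convex: log_convex_orbits
    and x: "x \<noteq> 0"
  shows "strictly_convex_on {0..} (\<lambda>t. norm (T t x))"
  unfolding strictly_convex_on_def
proof (intro ballI allI impI, elim conjE)
  fix a b u :: real
  assume a: "a \<in> {0..}" and b: "b \<in> {0..}" and ab: "a \<noteq> b" and u: "0 < u" "u < 1"
  define m where "m = (1 - u) * a + u * b"
  have pos: "0 < norm (T a x)" "0 < norm (T b x)" "0 < norm (T m x)"
    using orbit_neq_0[OF x] a b u by (auto simp: m_def)
  have "norm (T a x) \<noteq> norm (T b x)"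
    using orbit_norm_strict_decreasing[OF NR x] a b ab by (metis atLeast_iff less_irrefl neqE)
  note mean_less = weighted_geometric_mean_less[OF pos(1,2) this u]
  have "ln (norm (T m x)) \<le> (1 - u) * ln (norm (T a x)) + u * ln (norm (T b x))"
    using convex_onD[of "{0..}" "\<lambda>t. ln (norm (T t x))" u a b] log_convex x a b u
    unfolding log_convex_orbits_iff m_def by simp
  then have "norm (T m x) \<le> norm (T a x) powr (1 - u) * norm (T b x) powr u"
    using le_powr_mult_powr_iff_ln_le[OF pos(1,2,3)] by blast
  also have "\<dots> < (1 - u) * norm (T a x) + u * norm (T b x)"
    by (rule mean_less)
  finally show "norm (T ((1 - u) * a + u * b) x) < (1 - u) * norm (T a x) + u * norm (T b x)"
    by (simp add: m_def)
qed

lemma convex_on_orbit_norm: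
  assumes "numerical_range DA A \<subseteq> {z. 0 < Re z}" log_convex_orbits "x \<noteq> 0"
  shows "convex_on {0..} (\<lambda>t. norm (T t x))"
proof (rule convex_on_linorderI)
  fix u a b :: real
  assume "0 < u" "u < 1" "a \<in> {0..}" "b \<in> {0..}" "a < b"
  then show "norm (T ((1 - u) *\<^sub>R a + u *\<^sub>R b) x) \<le> (1 - u) * norm (T a x) + u * norm (T b x)"
    using strictly_convex_on_orbit_norm[OF assms] unfolding strictly_convex_on_def
    by (metis less_eq_real_def less_irrefl real_scaleR_def)
qed simp

lemma INF_deriv_orbit_norm_le:
  assumes NR: "numerical_range DA A \<subseteq> {z. 0 < Re z}" and x: "norm x = 1"
  shows "(INF t\<in>{0<..}. ereal (- rinner (A (T t x)) (T t x) / norm (T t x)))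
    \<le> ereal (- num_lower_bound DA A)"
proof -
  let ?m = "num_lower_bound DA A"
  have "((\<lambda>t. ereal (- ?m * norm (T t x))) \<longlongrightarrow> ereal (- ?m * norm x)) (at_right 0)"
    by (intro tendsto_intros orbit_tendsto_0)
  moreover have "\<forall>\<^sub>F t in at_right 0.
      (INF t\<in>{0<..}. ereal (- rinner (A (T t x)) (T t x) / norm (T t x))) \<le> ereal (- ?m * norm (T t x))"
    using eventually_at_right_less[of 0]
  proof eventually_elim
    case (elim t)
    have "x \<noteq> 0"
      using x by auto
    then have u: "T t x \<in> DA" "T t x \<noteq> 0"
      using orbit_derivative(1)[OF elim] orbit_neq_0[of x t] elim by auto
    have "- rinner (A (T t x)) (T t x) / norm (T t x) \<le> - ?m * norm (T t x)"
      using num_lower_bound_le[OF NR u] u(2) by (simp add: field_simps power2_eq_square)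
    then show ?case
      using elim by (intro INF_lower2[of t]) auto
  qed
  ultimately show ?thesis
    using x by (intro tendsto_lowerbound) auto
qed

lemma has_real_derivative_orbit_norm_domain:
  assumes "x \<in> DA" "x \<noteq> 0" "0 \<le> t"
  shows "((\<lambda>t. norm (T t x)) has_real_derivative - rinner (T t (A x)) (T t x) / norm (T t x))
    (at t within {0..})"
  using has_real_derivative_norm[OF has_vector_derivative_orbit[OF assms(1,3)] orbit_neq_0[OF assms(2,3)]]
  by (simp add: rinner_minus_left)

lemma orbit_norm_continuously_differentiable:
  assumes "x \<in> DA" "x \<noteq> 0"
  shows "\<exists>h'. (\<forall>t\<ge>0. ((\<lambda>t. norm (T t x)) has_real_derivative h' t) (at t within {0..}))
    \<and> continuous_on {0..} h'"
proof (intro exI conjI allI impI)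
  show "((\<lambda>t. norm (T t x)) has_real_derivative - rinner (T t (A x)) (T t x) / norm (T t x))
      (at t within {0..})" if "0 \<le> t" for t
    by (rule has_real_derivative_orbit_norm_domain[OF assms that])
  show "continuous_on {0..} (\<lambda>t. - rinner (T t (A x)) (T t x) / norm (T t x))"
    using orbit_neq_0[OF assms(2)]
    by (intro continuous_intros bounded_bilinear.continuous_on[OF bounded_bilinear_rinner]
        continuous_on_orbit) auto
qed

lemma orbit_norm_slope_tendsto_domain:
  assumes "x \<in> DA" "x \<noteq> 0"
  shows "((\<lambda>t. ereal ((norm (T t x) - norm (T 0 x)) / t)) \<longlongrightarrow> ereal (- rinner (A x) x / norm x))
    (at_right 0)"
proof -
  have "((\<lambda>t. (norm (T t x) - norm (T 0 x)) / t) \<longlongrightarrow> - rinner (T 0 (A x)) (T 0 x) / norm (T 0 x))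
      (at_right 0)"
    using has_real_derivative_orbit_norm_domain[OF assms order_refl]
    unfolding has_field_derivative_iff at_within_Ici_at_right by simp
  then show ?thesis
    by (intro tendsto_ereal) simp
qed

lemma orbit_norm_right_derivative:
  assumes NR: "numerical_range DA A \<subseteq> {z. 0 < Re z}" and log_convex: log_convex_orbits
    and x: "x \<noteq> 0"
  shows "\<exists>d::ereal. d \<le> 0 \<and> ((\<lambda>t. ereal ((norm (T t x) - norm (T 0 x)) / t)) \<longlongrightarrow> d) (at_right 0)
    \<and> (norm x = 1 \<longrightarrow>
         (\<exists>h'. (\<forall>t>0. ((\<lambda>t. norm (T t x)) has_real_derivative h' t) (at t))
               \<and> d = (INF t\<in>{0<..}. ereal (h' t))
               \<and> d \<le> ereal (- num_lower_bound DA A)))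
    \<and> (x \<in> DA \<and> norm x = 1 \<longrightarrow>
         d = ereal (- Re (cinner (A x) x))
         \<and> (\<exists>h'. (\<forall>t\<ge>0. ((\<lambda>t. norm (T t x)) has_real_derivative h' t) (at t within {0..}))
                \<and> continuous_on {0..} h')
         \<and> (\<forall>n. \<forall>t>0. (deriv ^^ n) (\<lambda>t. norm (T t x)) differentiable (at t)))"
proof -
  let ?h = "\<lambda>t. norm (T t x)"
  let ?h' = "\<lambda>t. - rinner (A (T t x)) (T t x) / norm (T t x)"
  define d where "d = (INF t\<in>{0<..}. ereal ((?h t - ?h 0) / t))"
  have convex: "convex_on {0..} ?h"
    by (rule convex_on_orbit_norm[OF NR log_convex x])
  have lim: "((\<lambda>t. ereal ((?h t - ?h 0) / t)) \<longlongrightarrow> d) (at_right 0)"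
    unfolding d_def by (rule convex_on_slope_tendsto_INF[OF convex])
  have d_INF: "d = (INF t\<in>{0<..}. ereal (?h' t))"
    unfolding d_def
    by (rule convex_on_INF_slope_eq_INF_deriv[OF convex continuous_on_orbit_norm
          has_real_derivative_orbit_norm[OF x]])
  have "d \<le> ereal ((?h 1 - ?h 0) / 1)"
    unfolding d_def by (rule INF_lower) simp
  also have "\<dots> \<le> 0"
    using orbit_norm_strict_decreasing[OF NR x, of 0 1] by simp
  finally have "d \<le> 0" .
  moreover have "d = ereal (- Re (cinner (A x) x))" if "x \<in> DA" "norm x = 1"
    using tendsto_unique[OF _ orbit_norm_slope_tendsto_domain[OF that(1) x] lim] that(2)
    by (simp add: rinner_def)
  moreover have "\<exists>h'. (\<forall>t>0. (?h has_real_derivative h' t) (at t))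
      \<and> d = (INF t\<in>{0<..}. ereal (h' t)) \<and> d \<le> ereal (- num_lower_bound DA A)" if "norm x = 1"
    using has_real_derivative_orbit_norm[OF x] d_INF INF_deriv_orbit_norm_le[OF NR that]
    by (intro exI[of _ ?h']) simp
  ultimately show ?thesis
    using lim orbit_norm_continuously_differentiable[OF _ x] orbit_norm_higher_deriv_differentiable[OF x]
    by (intro exI[of _ d]) auto
qed

end

theorem theorem2p5:
  fixes T :: "real \<Rightarrow> 'a::complex_hilbert \<Rightarrow> 'a"
    and A :: "'a \<Rightarrow> 'a"
    and DA :: "'a set"
  assumes semigroup: "C0_semigroup T"
    and gen: "is_generator T DA (\<lambda>x. - A x)"
    and bounded: "uniformly_bounded_semigroup T"
    and holo: "holomorphic_semigroup T"
  shows
    "((\<forall>x. x \<in> DA \<and> A x \<in> DA \<and> norm x = 1 \<longrightarrow>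
          2 * (Re (cinner (A x) x))\<^sup>2 \<le> Re (cinner (A (A x)) x) + (norm (A x))\<^sup>2)
      \<longleftrightarrow>
      (\<forall>u0. u0 \<noteq> 0 \<longrightarrow> (\<forall>r s t. 0 \<le> r \<and> r < s \<and> s < t \<longrightarrow>
          norm (T s u0) \<le> norm (T r u0) powr ((t - s) / (t - r)) * norm (T t u0) powr ((s - r) / (t - r)))))
    \<and>
    (((\<forall>x. x \<in> DA \<and> A x \<in> DA \<and> norm x = 1 \<longrightarrow>
          2 * (Re (cinner (A x) x))\<^sup>2 \<le> Re (cinner (A (A x)) x) + (norm (A x))\<^sup>2)
      \<and> (\<forall>u0. u0 \<noteq> 0 \<longrightarrow> (\<forall>r s t. 0 \<le> r \<and> r < s \<and> s < t \<longrightarrow>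
          norm (T s u0) \<le> norm (T r u0) powr ((t - s) / (t - r)) * norm (T t u0) powr ((s - r) / (t - r))))
      \<and> numerical_range DA A \<subseteq> {z. Re z > 0})
     \<longrightarrow>
     (\<forall>u0. u0 \<noteq> 0 \<longrightarrow>
        (let h = (\<lambda>t. norm (T t u0)) in
          (\<forall>s t. 0 \<le> s \<and> s < t \<longrightarrow> h t < h s)
          \<and> strictly_convex_on {0..} h
          \<and> (\<exists>d::ereal. d \<le> 0 \<and> ((\<lambda>t. ereal ((h t - h 0) / t)) \<longlongrightarrow> d) (at_right 0)
              \<and> (norm u0 = 1 \<longrightarrow>
                   (\<exists>h'. (\<forall>t>0. (h has_real_derivative h' t) (at t))
                         \<and> d = (INF t\<in>{0<..}. ereal (h' t))
                         \<and> d \<le> ereal (- num_lower_bound DA A)))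
              \<and> (u0 \<in> DA \<and> norm u0 = 1 \<longrightarrow>
                   d = ereal (- Re (cinner (A u0) u0))
                   \<and> (\<exists>h'. (\<forall>t\<ge>0. (h has_real_derivative h' t) (at t within {0..}))
                          \<and> continuous_on {0..} h')
                   \<and> (\<forall>n. \<forall>t>0. (deriv ^^ n) h differentiable (at t)))))))"
proof -
  interpret holomorphic_C0_semigroup_generator T A DA
    using semigroup gen holo by unfold_locales
  have "log_convexity_criterion \<longleftrightarrow> log_convex_orbits"
    using criterion_imp_log_convex_orbits log_convex_orbits_imp_criterion by blast
  then show ?thesis
    unfolding log_convexity_criterion_def[symmetric] log_convex_orbits_def[symmetric] Let_def
    using orbit_norm_strict_decreasing strictly_convex_on_orbit_norm orbit_norm_right_derivative
    by blast
qed

end
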